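(* Let $\mathcal{P}=((\mathcal{S},\mathcal{T}),(\mathcal{U},\mathcal{V}))$ be a twin cotorsion pair on a triangulated category $\mathcal{C}$ with associated functor $H\colon\mathcal{C}\to\mathcal{H}/\mathcal{W}$. Then $H(\mathcal{U}*\mathcal{T})=0$; thus $H$ factors through the quotient $\mathcal{C}\to\mathcal{C}/(\mathcal{U}*\mathcal{T})$. In particular $H(\mathcal{U})=H(\mathcal{T})=0$.
   Context: For full subcategories $\mathcal{X},\mathcal{Y}$, $\mathcal{X}*\mathcal{Y}$ is the full subcategory of objects $C$ admitting a distinguished triangle $X\to C\to Y\to X[1]$ with $X\in\mathcal{X}$, $Y\in\mathcal{Y}$. A cotorsion pair $(\mathcal{A},\mathcal{B})$: full subcategories closed under isomorphisms, finite direct sums and summands with $\mathcal{C}=\mathcal{A}*\mathcal{B}[1]$ and $\mathcal{C}(\mathcal{A},\mathcal{B}[1])=0$. A twin cotorsion pair $((\mathcal{S},\mathcal{T}),(\mathcal{U},\mathcal{V}))$: two cotorsion pairs with $\mathcal{C}(\mathcal{S},\mathcal{V}[1])=0$. Associated data: $\mathcal{W}=\mathcal{U}\cap\mathcal{T}$, $\mathcal{C}^+=\mathcal{W}*\mathcal{V}[1]$, $\mathcal{C}^-=\mathcal{S}[-1]*\mathcal{W}$, $\mathcal{H}=\mathcal{C}^+\cap\mathcal{C}^-$; ideal quotients $\mathcal{C}/\mathcal{W}$, $\mathcal{H}/\mathcal{W}$ by morphisms factoring through objects of the given subcategory; $\tau^+$ left adjoint of $\mathcal{C}^+/\mathcal{W}\hookrightarrow\mathcal{C}/\mathcal{W}$,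 $\tau^-$ right adjoint of $\mathcal{C}^-/\mathcal{W}\hookrightarrow\mathcal{C}/\mathcal{W}$; $H$ is the quotient functor followed by $\tau^+\tau^-$. *)

theory Defs
  imports Main
begin

text \<open>A category is given by a set of objects, hom-sets (pairwise disjoint, as in
Mac Lane), composition (cmp g f = g o f), identities. Distinguished triangles
X --f--> Y --g--> Z --h--> X[1] are sextuples (X,Y,Z,f,g,h).\<close>

record ('o, 'm) tricat =
  obj  :: "'o set"
  hom  :: "'o \<Rightarrow> 'o \<Rightarrow> 'm set"
  cmp  :: "'m \<Rightarrow> 'm \<Rightarrow> 'm"
  idm  :: "'o \<Rightarrow> 'm"
  zer  :: "'o \<Rightarrow> 'o \<Rightarrow> 'm"
  pls  :: "'m \<Rightarrow> 'm \<Rightarrow> 'm"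
  ngt  :: "'m \<Rightarrow> 'm"
  sho  :: "'o \<Rightarrow> 'o"
  shm  :: "'m \<Rightarrow> 'm"
  dist :: "('o \<times> 'o \<times> 'o \<times> 'm \<times> 'm \<times> 'm) set"

definition is_iso :: "('o,'m,'x) tricat_scheme \<Rightarrow> 'o \<Rightarrow> 'o \<Rightarrow> 'm \<Rightarrow> bool" where
  "is_iso C X Y f \<longleftrightarrow> f \<in> hom C X Y \<and>
     (\<exists>g \<in> hom C Y X. cmp C g f = idm C X \<and> cmp C f g = idm C Y)"

definition isomorphic :: "('o,'m,'x) tricat_scheme \<Rightarrow> 'o \<Rightarrow> 'o \<Rightarrow> bool" where
  "isomorphic C X Y \<longleftrightarrow> (\<exists>f. is_iso C X Y f)"

definition zero_obj :: "('o,'m,'x) tricat_scheme \<Rightarrow> 'o \<Rightarrow> bool" where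
  "zero_obj C Z \<longleftrightarrow> Z \<in> obj C \<and>
     (\<forall>X \<in> obj C. hom C Z X = {zer C Z X} \<and> hom C X Z = {zer C X Z})"

definition biproduct :: "('o,'m,'x) tricat_scheme \<Rightarrow> 'o \<Rightarrow> 'o \<Rightarrow> 'o
     \<Rightarrow> 'm \<Rightarrow> 'm \<Rightarrow> 'm \<Rightarrow> 'm \<Rightarrow> bool" where
  "biproduct C X Y B i1 i2 p1 p2 \<longleftrightarrow> B \<in> obj C \<and>
     i1 \<in> hom C X B \<and> i2 \<in> hom C Y B \<and> p1 \<in> hom C B X \<and> p2 \<in> hom C B Y \<and>
     cmp C p1 i1 = idm C X \<and> cmp C p2 i2 = idm C Y \<and>
     cmp C p1 i2 = zer C Y X \<and> cmp C p2 i1 = zer C X Y \<and>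
     pls C (cmp C i1 p1) (cmp C i2 p2) = idm C B"

definition additive_category :: "('o,'m,'x) tricat_scheme \<Rightarrow> bool" where
  "additive_category C \<longleftrightarrow>
     (\<forall>X Y. (X \<notin> obj C \<or> Y \<notin> obj C) \<longrightarrow> hom C X Y = {}) \<and>
     (\<forall>X Y X' Y' f. f \<in> hom C X Y \<and> f \<in> hom C X' Y' \<longrightarrow> X = X' \<and> Y = Y') \<and>
     (\<forall>X \<in> obj C. idm C X \<in> hom C X X) \<and>
     (\<forall>X Y Z f g. f \<in> hom C X Y \<and> g \<in> hom C Y Z \<longrightarrow> cmp C g f \<in> hom C X Z) \<and>
     (\<forall>X Y f. f \<in> hom C X Y \<longrightarrow> cmp C (idm C Y) f = f \<and> cmp C f (idm C X) = f) \<and>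
     (\<forall>W X Y Z f g h. f \<in> hom C W X \<and> g \<in> hom C X Y \<and> h \<in> hom C Y Z \<longrightarrow>
        cmp C h (cmp C g f) = cmp C (cmp C h g) f) \<and>
     (\<forall>X \<in> obj C. \<forall>Y \<in> obj C. zer C X Y \<in> hom C X Y) \<and>
     (\<forall>X Y f g. f \<in> hom C X Y \<and> g \<in> hom C X Y \<longrightarrow>
        pls C f g \<in> hom C X Y \<and> ngt C f \<in> hom C X Y \<and>
        pls C f g = pls C g f \<and> pls C f (zer C X Y) = f \<and>
        pls C f (ngt C f) = zer C X Y) \<and>
     (\<forall>X Y f g h. f \<in> hom C X Y \<and> g \<in> hom C X Y \<and> h \<in> hom C X Y \<longrightarrow>
        pls C (pls C f g) h = pls C f (pls C g h)) \<and>
     (\<forall>X Y Z f g h. f \<in> hom C X Y \<and> g \<in> hom C X Y \<and> h \<in> hom C Y Z \<longrightarrow>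
        cmp C h (pls C f g) = pls C (cmp C h f) (cmp C h g)) \<and>
     (\<forall>X Y Z f g h. f \<in> hom C Y Z \<and> g \<in> hom C Y Z \<and> h \<in> hom C X Y \<longrightarrow>
        cmp C (pls C f g) h = pls C (cmp C f h) (cmp C g h)) \<and>
     (\<exists>Z. zero_obj C Z) \<and>
     (\<forall>X \<in> obj C. \<forall>Y \<in> obj C. \<exists>B i1 i2 p1 p2. biproduct C X Y B i1 i2 p1 p2)"

definition shift_equivalence :: "('o,'m,'x) tricat_scheme \<Rightarrow> bool" where
  "shift_equivalence C \<longleftrightarrow>
     (\<forall>X \<in> obj C. sho C X \<in> obj C) \<and>
     (\<forall>X Y f. f \<in> hom C X Y \<longrightarrow> shm C f \<in> hom C (sho C X) (sho C Y)) \<and>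
     (\<forall>X Y Z f g. f \<in> hom C X Y \<and> g \<in> hom C Y Z \<longrightarrow>
        shm C (cmp C g f) = cmp C (shm C g) (shm C f)) \<and>
     (\<forall>X \<in> obj C. shm C (idm C X) = idm C (sho C X)) \<and>
     (\<forall>X Y f g. f \<in> hom C X Y \<and> g \<in> hom C X Y \<longrightarrow>
        shm C (pls C f g) = pls C (shm C f) (shm C g)) \<and>
     (\<forall>X \<in> obj C. \<forall>Y \<in> obj C. bij_betw (shm C) (hom C X Y) (hom C (sho C X) (sho C Y))) \<and>
     (\<forall>Y \<in> obj C. \<exists>X \<in> obj C. isomorphic C (sho C X) Y)"

definition triangle :: "('o,'m,'x) tricat_scheme \<Rightarrow> 'o \<Rightarrow> 'o \<Rightarrow> 'o \<Rightarrow> 'm \<Rightarrow> 'm \<Rightarrow> 'm \<Rightarrow> bool" where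
  "triangle C X Y Z f g h \<longleftrightarrow> f \<in> hom C X Y \<and> g \<in> hom C Y Z \<and> h \<in> hom C Z (sho C X)"

definition triangulated_category :: "('o,'m,'x) tricat_scheme \<Rightarrow> bool" where
  "triangulated_category C \<longleftrightarrow> additive_category C \<and> shift_equivalence C \<and>
     \<comment> \<open>distinguished triangles are triangles\<close>
     (\<forall>X Y Z f g h. (X,Y,Z,f,g,h) \<in> dist C \<longrightarrow> triangle C X Y Z f g h) \<and>
     \<comment> \<open>TR1: closure under isomorphism of triangles\<close>
     (\<forall>X Y Z f g h X' Y' Z' f' g' h' a b c.
        (X,Y,Z,f,g,h) \<in> dist C \<and> triangle C X' Y' Z' f' g' h' \<and>
        is_iso C X X' a \<and> is_iso C Y Y' b \<and> is_iso C Z Z' c \<and>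
        cmp C b f = cmp C f' a \<and> cmp C c g = cmp C g' b \<and>
        cmp C (shm C a) h = cmp C h' c \<longrightarrow> (X',Y',Z',f',g',h') \<in> dist C) \<and>
     \<comment> \<open>TR1: X = X -> 0 -> X[1] is distinguished\<close>
     (\<forall>X \<in> obj C. \<forall>Z. zero_obj C Z \<longrightarrow>
        (X, X, Z, idm C X, zer C X Z, zer C Z (sho C X)) \<in> dist C) \<and>
     \<comment> \<open>TR1: every morphism extends to a distinguished triangle\<close>
     (\<forall>X Y f. f \<in> hom C X Y \<longrightarrow> (\<exists>Z g h. (X,Y,Z,f,g,h) \<in> dist C)) \<and>
     \<comment> \<open>TR2: rotation\<close>
     (\<forall>X Y Z f g h. triangle C X Y Z f g h \<longrightarrow>
        ((X,Y,Z,f,g,h) \<in> dist C \<longleftrightarrow> (Y, Z, sho C X, g, h, ngt C (shm C f)) \<in> dist C)) \<and>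
     \<comment> \<open>TR3: completion of morphisms of triangles\<close>
     (\<forall>X Y Z f g h X' Y' Z' f' g' h' u v.
        (X,Y,Z,f,g,h) \<in> dist C \<and> (X',Y',Z',f',g',h') \<in> dist C \<and>
        u \<in> hom C X X' \<and> v \<in> hom C Y Y' \<and> cmp C v f = cmp C f' u \<longrightarrow>
        (\<exists>w \<in> hom C Z Z'. cmp C w g = cmp C g' v \<and> cmp C (shm C u) h = cmp C h' w)) \<and>
     \<comment> \<open>TR4: octahedral axiom\<close>
     (\<forall>X Y Z f g Z' f1 f2 X' g1 g2 Y' h1 h2.
        (X, Y, Z', f, f1, f2) \<in> dist C \<and> (Y, Z, X', g, g1, g2) \<in> dist C \<and>
        (X, Z, Y', cmp C g f, h1, h2) \<in> dist C \<longrightarrow>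
        (\<exists>u v. (Z', Y', X', u, v, cmp C (shm C f1) g2) \<in> dist C \<and>
           cmp C u f1 = cmp C h1 g \<and> cmp C h2 u = f2 \<and>
           cmp C v h1 = g1 \<and> cmp C g2 v = cmp C (shm C f) h2))"

text \<open>Full subcategories are represented by sets of objects.\<close>

definition ext :: "('o,'m,'x) tricat_scheme \<Rightarrow> 'o set \<Rightarrow> 'o set \<Rightarrow> 'o set" where
  "ext C \<X> \<Y> = {M \<in> obj C. \<exists>X Y f g h. X \<in> \<X> \<and> Y \<in> \<Y> \<and> (X, M, Y, f, g, h) \<in> dist C}"

definition shift_up :: "('o,'m,'x) tricat_scheme \<Rightarrow> 'o set \<Rightarrow> 'o set" where
  "shift_up C \<X> = {M \<in> obj C. \<exists>X \<in> \<X>. isomorphic C M (sho C X)}"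

definition shift_down :: "('o,'m,'x) tricat_scheme \<Rightarrow> 'o set \<Rightarrow> 'o set" where
  "shift_down C \<X> = {M \<in> obj C. sho C M \<in> \<X>}"

definition full_subcat :: "('o,'m,'x) tricat_scheme \<Rightarrow> 'o set \<Rightarrow> bool" where
  "full_subcat C \<A> \<longleftrightarrow> \<A> \<subseteq> obj C \<and>
     (\<forall>X Y. X \<in> \<A> \<and> Y \<in> obj C \<and> isomorphic C X Y \<longrightarrow> Y \<in> \<A>) \<and>
     (\<forall>Z. zero_obj C Z \<longrightarrow> Z \<in> \<A>) \<and>
     (\<forall>X Y B i1 i2 p1 p2. biproduct C X Y B i1 i2 p1 p2 \<longrightarrow>
        (X \<in> \<A> \<and> Y \<in> \<A> \<longleftrightarrow> B \<in> \<A>))"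

definition hom_vanish :: "('o,'m,'x) tricat_scheme \<Rightarrow> 'o set \<Rightarrow> 'o set \<Rightarrow> bool" where
  "hom_vanish C \<A> \<B> \<longleftrightarrow> (\<forall>A \<in> \<A>. \<forall>B \<in> \<B>. hom C A B = {zer C A B})"

definition cotorsion_pair :: "('o,'m,'x) tricat_scheme \<Rightarrow> 'o set \<Rightarrow> 'o set \<Rightarrow> bool" where
  "cotorsion_pair C \<A> \<B> \<longleftrightarrow> full_subcat C \<A> \<and> full_subcat C \<B> \<and>
     obj C = ext C \<A> (shift_up C \<B>) \<and> hom_vanish C \<A> (shift_up C \<B>)"

definition twin_cotorsion_pair ::
  "('o,'m,'x) tricat_scheme \<Rightarrow> 'o set \<Rightarrow> 'o set \<Rightarrow> 'o set \<Rightarrow> 'o set \<Rightarrow> bool" where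
  "twin_cotorsion_pair C \<S> \<T> \<U> \<V> \<longleftrightarrow> cotorsion_pair C \<S> \<T> \<and> cotorsion_pair C \<U> \<V> \<and>
     hom_vanish C \<S> (shift_up C \<V>)"

definition factors_through :: "('o,'m,'x) tricat_scheme \<Rightarrow> 'o set \<Rightarrow> 'o \<Rightarrow> 'o \<Rightarrow> 'm \<Rightarrow> bool" where
  "factors_through C \<W> X Y f \<longleftrightarrow> f \<in> hom C X Y \<and>
     (\<exists>W \<in> \<W>. \<exists>a \<in> hom C X W. \<exists>b \<in> hom C W Y. f = cmp C b a)"

text \<open>Equality of morphisms X \<rightarrow> Y in the ideal quotient C/\<W>.\<close>
definition qeq :: "('o,'m,'x) tricat_scheme \<Rightarrow> 'o set \<Rightarrow> 'o \<Rightarrow> 'o \<Rightarrow> 'm \<Rightarrow> 'm \<Rightarrow> bool" where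
  "qeq C \<W> X Y f g \<longleftrightarrow> f \<in> hom C X Y \<and> g \<in> hom C X Y \<and>
     factors_through C \<W> X Y (pls C f (ngt C g))"

text \<open>(A, e) is a value of the right adjoint of the inclusion \<D>/\<W> \<rightarrow> C/\<W> at X
(a \<D>-coreflection of X in C/\<W>, with counit e : A \<rightarrow> X).\<close>
definition coreflection :: "('o,'m,'x) tricat_scheme \<Rightarrow> 'o set \<Rightarrow> 'o set \<Rightarrow> 'o \<Rightarrow> 'o \<Rightarrow> 'm \<Rightarrow> bool" where
  "coreflection C \<W> \<D> X A e \<longleftrightarrow> A \<in> \<D> \<and> e \<in> hom C A X \<and>
     (\<forall>Y \<in> \<D>. \<forall>g \<in> hom C Y X. \<exists>p \<in> hom C Y A. qeq C \<W> Y X (cmp C e p) g) \<and>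
     (\<forall>Y \<in> \<D>. \<forall>p \<in> hom C Y A. \<forall>p' \<in> hom C Y A.
        qeq C \<W> Y X (cmp C e p) (cmp C e p') \<longrightarrow> qeq C \<W> Y A p p')"

text \<open>(B, u) is a value of the left adjoint of the inclusion \<D>/\<W> \<rightarrow> C/\<W> at X
(a \<D>-reflection of X in C/\<W>, with unit u : X \<rightarrow> B).\<close>
definition reflection :: "('o,'m,'x) tricat_scheme \<Rightarrow> 'o set \<Rightarrow> 'o set \<Rightarrow> 'o \<Rightarrow> 'o \<Rightarrow> 'm \<Rightarrow> bool" where
  "reflection C \<W> \<D> X B u \<longleftrightarrow> B \<in> \<D> \<and> u \<in> hom C X B \<and>
     (\<forall>Y \<in> \<D>. \<forall>g \<in> hom C X Y. \<exists>p \<in> hom C B Y. qeq C \<W> X Y (cmp C p u) g) \<and>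
     (\<forall>Y \<in> \<D>. \<forall>p \<in> hom C B Y. \<forall>p' \<in> hom C B Y.
        qeq C \<W> X Y (cmp C p u) (cmp C p' u) \<longrightarrow> qeq C \<W> B Y p p')"

definition tcp_W :: "'o set \<Rightarrow> 'o set \<Rightarrow> 'o set" where
  "tcp_W \<U> \<T> = \<U> \<inter> \<T>"

definition tcp_Cplus :: "('o,'m,'x) tricat_scheme \<Rightarrow> 'o set \<Rightarrow> 'o set \<Rightarrow> 'o set \<Rightarrow> 'o set" where
  "tcp_Cplus C \<T> \<U> \<V> = ext C (tcp_W \<U> \<T>) (shift_up C \<V>)"

definition tcp_Cminus :: "('o,'m,'x) tricat_scheme \<Rightarrow> 'o set \<Rightarrow> 'o set \<Rightarrow> 'o set \<Rightarrow> 'o set" where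
  "tcp_Cminus C \<S> \<T> \<U> = ext C (shift_down C \<S>) (tcp_W \<U> \<T>)"

text \<open>H(X) is computed as tau+ tau- X: (A, e) a value of tau- at X, (B, u) a value of
tau+ at A. This predicate says: B is (a representative of) H(X).\<close>
definition H_value ::
  "('o,'m,'x) tricat_scheme \<Rightarrow> 'o set \<Rightarrow> 'o set \<Rightarrow> 'o set \<Rightarrow> 'o set \<Rightarrow> 'o \<Rightarrow> 'o \<Rightarrow> 'm \<Rightarrow> 'o \<Rightarrow> 'm \<Rightarrow> bool" where
  "H_value C \<S> \<T> \<U> \<V> X A e B u \<longleftrightarrow>
     coreflection C (tcp_W \<U> \<T>) (tcp_Cminus C \<S> \<T> \<U>) X A e \<and>
     reflection C (tcp_W \<U> \<T>) (tcp_Cplus C \<T> \<U> \<V>) A B u"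

definition zero_in_quotient :: "('o,'m,'x) tricat_scheme \<Rightarrow> 'o set \<Rightarrow> 'o \<Rightarrow> bool" where
  "zero_in_quotient C \<W> B \<longleftrightarrow> factors_through C \<W> B B (idm C B)"

end

theory Submission
  imports Defs
begin

text \<open>
  \<open>H\<close> sends \<open>f : X \<rightarrow> Y\<close> to \<open>\<tau>\<^sup>+ \<psi>\<close>, where \<open>\<psi> : \<tau>\<^sup>- X \<rightarrow> \<tau>\<^sup>- Y\<close> lifts \<open>f\<close> along the
  \<open>\<C>\<^sup>-\<close>-coreflections. If \<open>f\<close> factors through \<open>M \<in> \<U> * \<T>\<close>, then any map from an object of
  \<open>\<C>\<^sup>- = \<S>[-1] * \<W>\<close> to \<open>M\<close> factors through \<open>\<U>\<close>: use \<open>Hom(\<S>[-1], \<T>) = 0\<close>, pull the triangle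
  \<open>U\<^sub>0 \<rightarrow> M \<rightarrow> T\<^sub>0\<close> back along the resulting map \<open>W\<^sub>0 \<rightarrow> T\<^sub>0\<close>, and use that \<open>\<U>\<close> is closed under
  extensions. As \<open>\<U> \<subseteq> \<C>\<^sup>-\<close>, this factorisation lifts through the coreflection of \<open>Y\<close>, so \<open>\<psi>\<close>
  factors through \<open>\<U>\<close> modulo \<open>\<W>\<close>. Finally every map from \<open>\<U>\<close> to \<open>\<C>\<^sup>+ = \<W> * \<V>[1]\<close> factors
  through \<open>\<W>\<close> because \<open>Hom(\<U>, \<V>[1]) = 0\<close>, hence \<open>\<tau>\<^sup>+ \<psi> = 0\<close> in \<open>\<H>/\<W>\<close>. Taking \<open>f = 1\<^sub>X\<close> gives
  \<open>H(\<U> * \<T>) = 0\<close>, and \<open>\<U>, \<T> \<subseteq> \<U> * \<T>\<close> via the triangles with a zero vertex.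
\<close>

section \<open>Additive categories\<close>

locale additive =
  fixes C :: "('o, 'm) tricat"
  assumes additive: "additive_category C"
begin

lemma hom_objs: "f \<in> hom C X Y \<Longrightarrow> X \<in> obj C \<and> Y \<in> obj C"
  using additive unfolding additive_category_def by (metis empty_iff)
lemma comp_in_hom: "f \<in> hom C X Y \<Longrightarrow> g \<in> hom C Y Z \<Longrightarrow> cmp C g f \<in> hom C X Z"
  using additive by (simp add: additive_category_def)
lemma id_in_hom: "X \<in> obj C \<Longrightarrow> idm C X \<in> hom C X X"
  using additive by (simp add: additive_category_def)
lemma comp_id_left: "f \<in> hom C X Y \<Longrightarrow> cmp C (idm C Y) f = f"
  using additive by (simp add: additive_category_def)
lemma comp_id_right: "f \<in> hom C X Y \<Longrightarrow> cmp C f (idm C X) = f"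
  using additive by (simp add: additive_category_def)
lemma comp_assoc: "f \<in> hom C W X \<Longrightarrow> g \<in> hom C X Y \<Longrightarrow> h \<in> hom C Y Z \<Longrightarrow>
     cmp C h (cmp C g f) = cmp C (cmp C h g) f"
  using additive by (simp add: additive_category_def)
lemma zero_in_hom: "X \<in> obj C \<Longrightarrow> Y \<in> obj C \<Longrightarrow> zer C X Y \<in> hom C X Y"
  using additive by (simp add: additive_category_def)
lemma add_in_hom: "f \<in> hom C X Y \<Longrightarrow> g \<in> hom C X Y \<Longrightarrow> pls C f g \<in> hom C X Y"
  using additive by (simp add: additive_category_def)
lemma neg_in_hom: "f \<in> hom C X Y \<Longrightarrow> ngt C f \<in> hom C X Y"
  using additive by (simp add: additive_category_def)
lemma add_commute: "f \<in> hom C X Y \<Longrightarrow> g \<in> hom C X Y \<Longrightarrow> pls C f g = pls C g f"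
  using additive by (simp add: additive_category_def)
lemma add_zero_right: "f \<in> hom C X Y \<Longrightarrow> pls C f (zer C X Y) = f"
  using additive by (simp add: additive_category_def)
lemma add_neg_right: "f \<in> hom C X Y \<Longrightarrow> pls C f (ngt C f) = zer C X Y"
  using additive by (simp add: additive_category_def)
lemma add_assoc: "f \<in> hom C X Y \<Longrightarrow> g \<in> hom C X Y \<Longrightarrow> h \<in> hom C X Y \<Longrightarrow>
     pls C (pls C f g) h = pls C f (pls C g h)"
  using additive by (simp add: additive_category_def)
lemma comp_add_distrib_left: "f \<in> hom C X Y \<Longrightarrow> g \<in> hom C X Y \<Longrightarrow> h \<in> hom C Y Z \<Longrightarrow>
     cmp C h (pls C f g) = pls C (cmp C h f) (cmp C h g)"
  using additive by (simp add: additive_category_def)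
lemma comp_add_distrib_right: "f \<in> hom C Y Z \<Longrightarrow> g \<in> hom C Y Z \<Longrightarrow> h \<in> hom C X Y \<Longrightarrow>
     cmp C (pls C f g) h = pls C (cmp C f h) (cmp C g h)"
  using additive by (simp add: additive_category_def)
lemma zero_object_exists: "\<exists>Z. zero_obj C Z"
  using additive by (simp add: additive_category_def)
lemma biproduct_exists: "X \<in> obj C \<Longrightarrow> Y \<in> obj C \<Longrightarrow> \<exists>B i1 i2 p1 p2. biproduct C X Y B i1 i2 p1 p2"
  using additive by (simp add: additive_category_def)

lemma add_zero_left: "f \<in> hom C X Y \<Longrightarrow> pls C (zer C X Y) f = f"
  by (metis add_zero_right add_commute hom_objs zero_in_hom)

lemma neg_unique:
  assumes f: "f \<in> hom C X Y" and g: "g \<in> hom C X Y" and sum: "pls C f g = zer C X Y"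
  shows "g = ngt C f"
proof -
  have "g = pls C g (pls C f (ngt C f))" using f g add_zero_right add_neg_right by metis
  also have "\<dots> = pls C (pls C g f) (ngt C f)" using f g add_assoc neg_in_hom by metis
  also have "\<dots> = ngt C f" using f g sum add_commute add_zero_left neg_in_hom by metis
  finally show ?thesis .
qed

lemma neg_neg: "f \<in> hom C X Y \<Longrightarrow> ngt C (ngt C f) = f"
  by (metis neg_unique neg_in_hom add_commute add_neg_right)

lemma neg_zero: "X \<in> obj C \<Longrightarrow> Y \<in> obj C \<Longrightarrow> ngt C (zer C X Y) = zer C X Y"
  by (metis neg_unique add_zero_right zero_in_hom)

lemma add_add_swap:
  assumes "a \<in> hom C X Y" "b \<in> hom C X Y" "c \<in> hom C X Y" "d \<in> hom C X Y"
  shows "pls C (pls C a b) (pls C c d) = pls C (pls C a c) (pls C b d)"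
proof -
  have "pls C (pls C a b) (pls C c d) = pls C a (pls C b (pls C c d))"
    using assms add_in_hom add_assoc by metis
  also have "pls C b (pls C c d) = pls C (pls C b c) d" using assms add_assoc by metis
  also have "pls C b c = pls C c b" using assms add_commute by metis
  also have "pls C (pls C c b) d = pls C c (pls C b d)" using assms add_assoc by metis
  also have "pls C a (pls C c (pls C b d)) = pls C (pls C a c) (pls C b d)"
    using assms add_in_hom add_assoc by metis
  finally show ?thesis .
qed

lemma add_add_neg_cancel:
  assumes x: "x \<in> hom C X Y" and y: "y \<in> hom C X Y"
  shows "pls C x (pls C y (ngt C x)) = y"
proof -
  have "pls C x (pls C y (ngt C x)) = pls C (pls C x (ngt C x)) y"
    using add_commute[OF y neg_in_hom[OF x]] add_assoc[OF x neg_in_hom[OF x] y] by simp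
  then show ?thesis using add_neg_right[OF x] add_zero_left[OF y] by simp
qed

lemma neg_add:
  assumes f: "f \<in> hom C X Y" and g: "g \<in> hom C X Y"
  shows "ngt C (pls C f g) = pls C (ngt C f) (ngt C g)"
proof -
  have n: "ngt C f \<in> hom C X Y" "ngt C g \<in> hom C X Y" using f g neg_in_hom by auto
  have "pls C (pls C f g) (pls C (ngt C f) (ngt C g)) = pls C (pls C f (ngt C f)) (pls C g (ngt C g))"
    using add_add_swap[OF f g n] .
  also have "\<dots> = zer C X Y" using f g add_neg_right add_zero_right hom_objs zero_in_hom by metis
  finally show ?thesis using f g n neg_unique add_in_hom by metis
qed

lemma eq_if_add_self: "f \<in> hom C X Y \<Longrightarrow> pls C f f = f \<Longrightarrow> f = zer C X Y"
  by (metis add_assoc add_neg_right add_zero_right neg_in_hom)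

lemma eq_if_diff_zero:
  "f \<in> hom C X Y \<Longrightarrow> g \<in> hom C X Y \<Longrightarrow> pls C f (ngt C g) = zer C X Y \<Longrightarrow> f = g"
  by (metis neg_unique neg_neg neg_in_hom add_commute)

lemma comp_zero_right:
  assumes f: "f \<in> hom C Y Z" and X: "X \<in> obj C"
  shows "cmp C f (zer C X Y) = zer C X Z"
proof -
  have z: "zer C X Y \<in> hom C X Y" using f X hom_objs zero_in_hom by blast
  have "cmp C f (zer C X Y) = cmp C f (pls C (zer C X Y) (zer C X Y))" by (simp add: add_zero_right[OF z])
  also have "\<dots> = pls C (cmp C f (zer C X Y)) (cmp C f (zer C X Y))"
    using f z comp_add_distrib_left by blast
  finally show ?thesis using eq_if_add_self[OF comp_in_hom[OF z f]] by simp
qed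

lemma comp_zero_left:
  assumes f: "f \<in> hom C X Y" and Z: "Z \<in> obj C"
  shows "cmp C (zer C Y Z) f = zer C X Z"
proof -
  have z: "zer C Y Z \<in> hom C Y Z" using f Z hom_objs zero_in_hom by blast
  have "cmp C (zer C Y Z) f = cmp C (pls C (zer C Y Z) (zer C Y Z)) f" by (simp add: add_zero_right[OF z])
  also have "\<dots> = pls C (cmp C (zer C Y Z) f) (cmp C (zer C Y Z) f)"
    using f z comp_add_distrib_right by blast
  finally show ?thesis using eq_if_add_self[OF comp_in_hom[OF f z]] by simp
qed

lemma comp_neg_left:
  assumes f: "f \<in> hom C Y Z" and g: "g \<in> hom C X Y"
  shows "cmp C (ngt C f) g = ngt C (cmp C f g)"
proof -
  have "pls C (cmp C f g) (cmp C (ngt C f) g) = cmp C (pls C f (ngt C f)) g"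
    using comp_add_distrib_right[OF f neg_in_hom[OF f] g] by simp
  also have "\<dots> = zer C X Z" using f g add_neg_right comp_zero_left hom_objs by simp
  finally show ?thesis using neg_unique[OF comp_in_hom[OF g f] comp_in_hom[OF g neg_in_hom[OF f]]] by simp
qed

lemma comp_neg_right:
  assumes f: "f \<in> hom C Y Z" and g: "g \<in> hom C X Y"
  shows "cmp C f (ngt C g) = ngt C (cmp C f g)"
proof -
  have "pls C (cmp C f g) (cmp C f (ngt C g)) = cmp C f (pls C g (ngt C g))"
    using comp_add_distrib_left[OF g neg_in_hom[OF g] f] by simp
  also have "\<dots> = zer C X Z" using f g add_neg_right comp_zero_right hom_objs by simp
  finally show ?thesis using neg_unique[OF comp_in_hom[OF g f] comp_in_hom[OF neg_in_hom[OF g] f]] by simp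
qed

lemma zero_obj_in_obj: "zero_obj C Z \<Longrightarrow> Z \<in> obj C"
  by (simp add: zero_obj_def)

lemma biproduct_copair_inl:
  assumes bp: "biproduct C X Y B i1 i2 p1 p2" and b: "b \<in> hom C X W" and b': "b' \<in> hom C Y W"
  shows "cmp C (pls C (cmp C b p1) (cmp C b' p2)) i1 = b"
proof -
  have D: "i1 \<in> hom C X B" "p1 \<in> hom C B X" "p2 \<in> hom C B Y"
    "cmp C p1 i1 = idm C X" "cmp C p2 i1 = zer C X Y"
    using bp unfolding biproduct_def by auto
  have "cmp C (pls C (cmp C b p1) (cmp C b' p2)) i1 = pls C (cmp C (cmp C b p1) i1) (cmp C (cmp C b' p2) i1)"
    using comp_add_distrib_right[OF comp_in_hom[OF D(2) b] comp_in_hom[OF D(3) b'] D(1)] .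
  also have "\<dots> = pls C (cmp C b (cmp C p1 i1)) (cmp C b' (cmp C p2 i1))"
    using comp_assoc[OF D(1) D(2) b] comp_assoc[OF D(1) D(3) b'] by simp
  also have "\<dots> = pls C b (zer C X W)"
    using D(4,5) comp_id_right[OF b] comp_zero_right[OF b'] hom_objs[OF b] by simp
  finally show ?thesis using add_zero_right[OF b] by simp
qed

lemma biproduct_copair_inr:
  assumes bp: "biproduct C X Y B i1 i2 p1 p2" and b: "b \<in> hom C X W" and b': "b' \<in> hom C Y W"
  shows "cmp C (pls C (cmp C b p1) (cmp C b' p2)) i2 = b'"
proof -
  have D: "i2 \<in> hom C Y B" "p1 \<in> hom C B X" "p2 \<in> hom C B Y"
    "cmp C p2 i2 = idm C Y" "cmp C p1 i2 = zer C Y X"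
    using bp unfolding biproduct_def by auto
  have "cmp C (pls C (cmp C b p1) (cmp C b' p2)) i2 = pls C (cmp C (cmp C b p1) i2) (cmp C (cmp C b' p2) i2)"
    using comp_add_distrib_right[OF comp_in_hom[OF D(2) b] comp_in_hom[OF D(3) b'] D(1)] .
  also have "\<dots> = pls C (cmp C b (cmp C p1 i2)) (cmp C b' (cmp C p2 i2))"
    using comp_assoc[OF D(1) D(2) b] comp_assoc[OF D(1) D(3) b'] by simp
  also have "\<dots> = pls C (zer C Y W) b'"
    using D(4,5) comp_id_right[OF b'] comp_zero_right[OF b] hom_objs[OF b'] by simp
  finally show ?thesis using add_zero_left[OF b'] by simp
qed

lemma full_subcat_Int:
  assumes A: "full_subcat C \<A>" and B: "full_subcat C \<B>"
  shows "full_subcat C (\<A> \<inter> \<B>)"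
  unfolding full_subcat_def
proof (intro conjI allI impI)
  show "\<A> \<inter> \<B> \<subseteq> obj C" using A unfolding full_subcat_def by blast
next
  fix X Y assume "X \<in> \<A> \<inter> \<B> \<and> Y \<in> obj C \<and> isomorphic C X Y"
  then show "Y \<in> \<A> \<inter> \<B>" using A B unfolding full_subcat_def by (meson IntD1 IntD2 IntI)
next
  fix Z assume "zero_obj C Z"
  then show "Z \<in> \<A> \<inter> \<B>" using A B unfolding full_subcat_def by blast
next
  fix X Y P i1 i2 p1 p2 assume "biproduct C X Y P i1 i2 p1 p2"
  then have "X \<in> \<A> \<and> Y \<in> \<A> \<longleftrightarrow> P \<in> \<A>" "X \<in> \<B> \<and> Y \<in> \<B> \<longleftrightarrow> P \<in> \<B>"
    using A B unfolding full_subcat_def by blast+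
  then show "X \<in> \<A> \<inter> \<B> \<and> Y \<in> \<A> \<inter> \<B> \<longleftrightarrow> P \<in> \<A> \<inter> \<B>" by blast
qed

lemma full_subcat_in_obj: "full_subcat C \<A> \<Longrightarrow> X \<in> \<A> \<Longrightarrow> X \<in> obj C"
  unfolding full_subcat_def by blast

lemma full_subcat_summand:
  "full_subcat C \<A> \<Longrightarrow> biproduct C X Y B i1 i2 p1 p2 \<Longrightarrow> B \<in> \<A> \<Longrightarrow> X \<in> \<A>"
  unfolding full_subcat_def by blast

lemma hom_vanishD: "hom_vanish C \<A> \<B> \<Longrightarrow> X \<in> \<A> \<Longrightarrow> Y \<in> \<B> \<Longrightarrow> m \<in> hom C X Y \<Longrightarrow> m = zer C X Y"
  unfolding hom_vanish_def by blast

lemma factors_throughI: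
  "W \<in> \<A> \<Longrightarrow> a \<in> hom C X W \<Longrightarrow> b \<in> hom C W Y \<Longrightarrow> factors_through C \<A> X Y (cmp C b a)"
  unfolding factors_through_def using comp_in_hom by blast

lemma factors_through_comp_left:
  assumes "factors_through C \<A> X Y f" and h: "h \<in> hom C Y Z"
  shows "factors_through C \<A> X Z (cmp C h f)"
proof -
  obtain W a b where "W \<in> \<A>" "a \<in> hom C X W" "b \<in> hom C W Y" "f = cmp C b a"
    using assms(1) unfolding factors_through_def by blast
  then show ?thesis using factors_throughI[of W \<A> a X "cmp C h b"] comp_in_hom comp_assoc h by simp
qed

lemma factors_through_comp_right:
  assumes "factors_through C \<A> X Y f" and h: "h \<in> hom C Z X"
  shows "factors_through C \<A> Z Y (cmp C f h)"
proof -
  obtain W a b where "W \<in> \<A>" "a \<in> hom C X W" "b \<in> hom C W Y" "f = cmp C b a"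
    using assms(1) unfolding factors_through_def by blast
  then show ?thesis using factors_throughI[of W \<A> "cmp C a h" Z b] comp_in_hom comp_assoc h by simp
qed

lemma factors_through_neg:
  assumes "factors_through C \<A> X Y f"
  shows "factors_through C \<A> X Y (ngt C f)"
proof -
  obtain W a b where "W \<in> \<A>" "a \<in> hom C X W" "b \<in> hom C W Y" "f = cmp C b a"
    using assms unfolding factors_through_def by blast
  then show ?thesis using factors_throughI[of W \<A> a X "ngt C b"] comp_neg_left neg_in_hom by simp
qed

context
  fixes \<A> :: "'o set"
  assumes full: "full_subcat C \<A>"
begin

lemma factors_through_zero:
  assumes "X \<in> obj C" "Y \<in> obj C"
  shows "factors_through C \<A> X Y (zer C X Y)"
proof -
  obtain Z where Z: "zero_obj C Z" using zero_object_exists by blast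
  then have "Z \<in> \<A>" "Z \<in> obj C" using full unfolding full_subcat_def zero_obj_def by auto
  then show ?thesis
    using factors_throughI[of Z \<A> "zer C X Z" X "zer C Z Y" Y] comp_zero_left assms zero_in_hom
    by metis
qed

text \<open>If \<open>f\<close> and \<open>g\<close> factor through \<open>W\<close> and \<open>W'\<close>, their sum factors through \<open>W \<oplus> W'\<close>;
  this is where closure of \<open>\<A>\<close> under biproducts is used.\<close>
lemma factors_through_add:
  assumes f: "factors_through C \<A> X Y f" and g: "factors_through C \<A> X Y g"
  shows "factors_through C \<A> X Y (pls C f g)"
proof -
  obtain W a b where A: "W \<in> \<A>" "a \<in> hom C X W" "b \<in> hom C W Y" "f = cmp C b a"
    using f unfolding factors_through_def by blast
  obtain W' a' b' where A': "W' \<in> \<A>" "a' \<in> hom C X W'" "b' \<in> hom C W' Y" "g = cmp C b' a'"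
    using g unfolding factors_through_def by blast
  obtain B i1 i2 p1 p2 where bp: "biproduct C W W' B i1 i2 p1 p2"
    using biproduct_exists[of W W'] hom_objs[OF A(3)] hom_objs[OF A'(3)] by blast
  have i: "i1 \<in> hom C W B" "i2 \<in> hom C W' B" and p: "p1 \<in> hom C B W" "p2 \<in> hom C B W'"
    using bp unfolding biproduct_def by auto
  have "W \<in> \<A> \<and> W' \<in> \<A> \<longleftrightarrow> B \<in> \<A>" using full bp unfolding full_subcat_def by blast
  then have B: "B \<in> \<A>" using A(1) A'(1) by blast
  define \<alpha> where "\<alpha> = pls C (cmp C i1 a) (cmp C i2 a')"
  define \<beta> where "\<beta> = pls C (cmp C b p1) (cmp C b' p2)"
  have ia: "cmp C i1 a \<in> hom C X B" "cmp C i2 a' \<in> hom C X B"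
    using A(2) A'(2) i comp_in_hom by blast+
  have \<alpha>: "\<alpha> \<in> hom C X B" unfolding \<alpha>_def using ia add_in_hom by blast
  have \<beta>: "\<beta> \<in> hom C B Y" unfolding \<beta>_def using A(3) A'(3) p comp_in_hom add_in_hom by blast
  have "cmp C \<beta> \<alpha> = pls C (cmp C \<beta> (cmp C i1 a)) (cmp C \<beta> (cmp C i2 a'))"
    unfolding \<alpha>_def using comp_add_distrib_left[OF ia \<beta>] .
  also have "\<dots> = pls C (cmp C (cmp C \<beta> i1) a) (cmp C (cmp C \<beta> i2) a')"
    using comp_assoc[OF A(2) i(1) \<beta>] comp_assoc[OF A'(2) i(2) \<beta>] by simp
  also have "\<dots> = pls C f g"
    unfolding \<beta>_def using biproduct_copair_inl[OF bp A(3) A'(3)] biproduct_copair_inr[OF bp A(3) A'(3)]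
      A(4) A'(4) by simp
  finally show ?thesis using factors_throughI[OF B \<alpha> \<beta>] by simp
qed

lemma qeq_refl:
  assumes f: "f \<in> hom C X Y"
  shows "qeq C \<A> X Y f f"
proof -
  have "X \<in> obj C" "Y \<in> obj C" using hom_objs[OF f] by auto
  then show ?thesis unfolding qeq_def add_neg_right[OF f] using f factors_through_zero by blast
qed

lemma qeq_sym:
  assumes q: "qeq C \<A> X Y f g"
  shows "qeq C \<A> X Y g f"
proof -
  have f: "f \<in> hom C X Y" and g: "g \<in> hom C X Y" using q unfolding qeq_def by auto
  have "ngt C (pls C f (ngt C g)) = pls C (ngt C f) (ngt C (ngt C g))"
    using neg_add[OF f neg_in_hom[OF g]] .
  also have "\<dots> = pls C g (ngt C f)" using neg_neg[OF g] add_commute[OF neg_in_hom[OF f] g] by simp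
  finally show ?thesis using q f g factors_through_neg unfolding qeq_def by metis
qed

lemma qeq_trans:
  assumes q1: "qeq C \<A> X Y f g" and q2: "qeq C \<A> X Y g k"
  shows "qeq C \<A> X Y f k"
proof -
  have f: "f \<in> hom C X Y" and g: "g \<in> hom C X Y" and k: "k \<in> hom C X Y"
    using q1 q2 unfolding qeq_def by auto
  have ng: "ngt C g \<in> hom C X Y" and nk: "ngt C k \<in> hom C X Y" using g k neg_in_hom by auto
  have "pls C (pls C f (ngt C g)) (pls C g (ngt C k)) = pls C (pls C f g) (pls C (ngt C g) (ngt C k))"
    using add_add_swap[OF f ng g nk] .
  also have "\<dots> = pls C f (pls C g (pls C (ngt C g) (ngt C k)))"
    using add_assoc[OF f g add_in_hom[OF ng nk]] .
  also have "pls C g (pls C (ngt C g) (ngt C k)) = ngt C k"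
    using add_assoc[OF g ng nk] add_neg_right[OF g] add_zero_left[OF nk] by simp
  finally have "pls C (pls C f (ngt C g)) (pls C g (ngt C k)) = pls C f (ngt C k)" .
  then show ?thesis using q1 q2 f k factors_through_add unfolding qeq_def by metis
qed

lemma qeq_comp_left:
  assumes q: "qeq C \<A> X Y f g" and h: "h \<in> hom C Y Z"
  shows "qeq C \<A> X Z (cmp C h f) (cmp C h g)"
proof -
  have f: "f \<in> hom C X Y" and g: "g \<in> hom C X Y" using q unfolding qeq_def by auto
  have "cmp C h (pls C f (ngt C g)) = pls C (cmp C h f) (ngt C (cmp C h g))"
    using comp_add_distrib_left[OF f neg_in_hom[OF g] h] comp_neg_right[OF h g] by simp
  then show ?thesis
    using q f g h factors_through_comp_left comp_in_hom unfolding qeq_def by metis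
qed

lemma qeq_comp_right:
  assumes q: "qeq C \<A> X Y f g" and h: "h \<in> hom C Z X"
  shows "qeq C \<A> Z Y (cmp C f h) (cmp C g h)"
proof -
  have f: "f \<in> hom C X Y" and g: "g \<in> hom C X Y" using q unfolding qeq_def by auto
  have "cmp C (pls C f (ngt C g)) h = pls C (cmp C f h) (ngt C (cmp C g h))"
    using comp_add_distrib_right[OF f neg_in_hom[OF g] h] comp_neg_left[OF g h] by simp
  then show ?thesis
    using q f g h factors_through_comp_right comp_in_hom unfolding qeq_def by metis
qed

lemma qeq_zero_iff:
  assumes f: "f \<in> hom C X Y"
  shows "qeq C \<A> X Y f (zer C X Y) \<longleftrightarrow> factors_through C \<A> X Y f"
proof -
  have "X \<in> obj C" "Y \<in> obj C" using hom_objs[OF f] by auto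
  then show ?thesis unfolding qeq_def using f neg_zero add_zero_right zero_in_hom by simp
qed

lemma factors_through_if_qeq:
  assumes q: "qeq C \<A> X Y f g" and g: "factors_through C \<A> X Y g"
  shows "factors_through C \<A> X Y f"
proof -
  have "f \<in> hom C X Y" "g \<in> hom C X Y" using q unfolding qeq_def by auto
  then show ?thesis using qeq_trans[OF q] g qeq_zero_iff by blast
qed

end

end

section \<open>Triangulated categories\<close>

locale triangulated = additive +
  assumes triangulated: "triangulated_category C"
begin

lemma triangulated_category_axioms:
  "shift_equivalence C"
  "\<forall>X Y Z f g h. (X,Y,Z,f,g,h) \<in> dist C \<longrightarrow> triangle C X Y Z f g h"
  "\<forall>X Y Z f g h X' Y' Z' f' g' h' a b c.
     (X,Y,Z,f,g,h) \<in> dist C \<and> triangle C X' Y' Z' f' g' h' \<and>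
     is_iso C X X' a \<and> is_iso C Y Y' b \<and> is_iso C Z Z' c \<and>
     cmp C b f = cmp C f' a \<and> cmp C c g = cmp C g' b \<and>
     cmp C (shm C a) h = cmp C h' c \<longrightarrow> (X',Y',Z',f',g',h') \<in> dist C"
  "\<forall>X \<in> obj C. \<forall>Z. zero_obj C Z \<longrightarrow>
     (X, X, Z, idm C X, zer C X Z, zer C Z (sho C X)) \<in> dist C"
  "\<forall>X Y f. f \<in> hom C X Y \<longrightarrow> (\<exists>Z g h. (X,Y,Z,f,g,h) \<in> dist C)"
  "\<forall>X Y Z f g h. triangle C X Y Z f g h \<longrightarrow>
     ((X,Y,Z,f,g,h) \<in> dist C \<longleftrightarrow> (Y, Z, sho C X, g, h, ngt C (shm C f)) \<in> dist C)"
  "\<forall>X Y Z f g h X' Y' Z' f' g' h' u v.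
     (X,Y,Z,f,g,h) \<in> dist C \<and> (X',Y',Z',f',g',h') \<in> dist C \<and>
     u \<in> hom C X X' \<and> v \<in> hom C Y Y' \<and> cmp C v f = cmp C f' u \<longrightarrow>
     (\<exists>w \<in> hom C Z Z'. cmp C w g = cmp C g' v \<and> cmp C (shm C u) h = cmp C h' w)"
  by (insert triangulated[unfolded triangulated_category_def], (elim conjE, assumption)+)

lemma shift_obj: "X \<in> obj C \<Longrightarrow> sho C X \<in> obj C"
  and shift_hom: "f \<in> hom C X Y \<Longrightarrow> shm C f \<in> hom C (sho C X) (sho C Y)"
  and shift_comp: "f \<in> hom C X Y \<Longrightarrow> g \<in> hom C Y Z \<Longrightarrow> shm C (cmp C g f) = cmp C (shm C g) (shm C f)"
  and shift_id: "X \<in> obj C \<Longrightarrow> shm C (idm C X) = idm C (sho C X)"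
  and shift_bij: "X \<in> obj C \<Longrightarrow> Y \<in> obj C \<Longrightarrow> bij_betw (shm C) (hom C X Y) (hom C (sho C X) (sho C Y))"
  and shift_ess_surj: "Y \<in> obj C \<Longrightarrow> \<exists>X \<in> obj C. isomorphic C (sho C X) Y"
  using triangulated_category_axioms(1) unfolding shift_equivalence_def by simp_all

lemma dist_in_hom: "(X,Y,Z,f,g,h) \<in> dist C \<Longrightarrow> f \<in> hom C X Y \<and> g \<in> hom C Y Z \<and> h \<in> hom C Z (sho C X)"
  using triangulated_category_axioms(2) unfolding triangle_def by blast

lemma dist_iso_closed: "(X,Y,Z,f,g,h) \<in> dist C \<Longrightarrow> triangle C X' Y' Z' f' g' h' \<Longrightarrow>
    is_iso C X X' a \<Longrightarrow> is_iso C Y Y' b \<Longrightarrow> is_iso C Z Z' c \<Longrightarrow>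
    cmp C b f = cmp C f' a \<Longrightarrow> cmp C c g = cmp C g' b \<Longrightarrow>
    cmp C (shm C a) h = cmp C h' c \<Longrightarrow> (X',Y',Z',f',g',h') \<in> dist C"
  using triangulated_category_axioms(3) by blast
lemma dist_id_zero: "X \<in> obj C \<Longrightarrow> zero_obj C Z \<Longrightarrow>
    (X, X, Z, idm C X, zer C X Z, zer C Z (sho C X)) \<in> dist C"
  using triangulated_category_axioms(4) by blast
lemma dist_exists: "f \<in> hom C X Y \<Longrightarrow> \<exists>Z g h. (X,Y,Z,f,g,h) \<in> dist C"
  using triangulated_category_axioms(5) by blast
lemma dist_rotate_iff: "triangle C X Y Z f g h \<Longrightarrow>
    (X,Y,Z,f,g,h) \<in> dist C \<longleftrightarrow> (Y, Z, sho C X, g, h, ngt C (shm C f)) \<in> dist C"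
  using triangulated_category_axioms(6) by blast
lemma dist_morphism_completion: "(X,Y,Z,f,g,h) \<in> dist C \<Longrightarrow> (X',Y',Z',f',g',h') \<in> dist C \<Longrightarrow>
    u \<in> hom C X X' \<Longrightarrow> v \<in> hom C Y Y' \<Longrightarrow> cmp C v f = cmp C f' u \<Longrightarrow>
    \<exists>w \<in> hom C Z Z'. cmp C w g = cmp C g' v \<and> cmp C (shm C u) h = cmp C h' w"
  using triangulated_category_axioms(7) by blast

lemma shift_inj: "f \<in> hom C X Y \<Longrightarrow> g \<in> hom C X Y \<Longrightarrow> shm C f = shm C g \<Longrightarrow> f = g"
  by (metis bij_betw_def hom_objs inj_on_def shift_bij)
lemma shift_surj: "k \<in> hom C (sho C X) (sho C Y) \<Longrightarrow> X \<in> obj C \<Longrightarrow> Y \<in> obj C \<Longrightarrow> \<exists>f \<in> hom C X Y. shm C f = k"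
  by (metis bij_betw_def imageE shift_bij)

lemma shift_neg_inj:
  assumes f: "f \<in> hom C X Y" and g: "g \<in> hom C X Y" and eq: "ngt C (shm C f) = ngt C (shm C g)"
  shows "f = g"
proof -
  have "shm C f = shm C g" using eq neg_neg shift_hom f g by metis
  then show ?thesis using shift_inj f g by blast
qed

lemma dist_rotate: "(X,Y,Z,f,g,h) \<in> dist C \<Longrightarrow> (Y, Z, sho C X, g, h, ngt C (shm C f)) \<in> dist C"
  using dist_rotate_iff triangulated_category_axioms(2) by blast

lemma dist_rotate_back:
  assumes d: "(Y, Z, sho C X, g, h, k) \<in> dist C" and X: "X \<in> obj C"
  shows "\<exists>f \<in> hom C X Y. (X,Y,Z,f,g,h) \<in> dist C \<and> ngt C (shm C f) = k"
proof -
  have t: "g \<in> hom C Y Z" "h \<in> hom C Z (sho C X)" "k \<in> hom C (sho C X) (sho C Y)"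
    using dist_in_hom[OF d] by auto
  obtain f where f: "f \<in> hom C X Y" "shm C f = ngt C k"
    using shift_surj[OF neg_in_hom[OF t(3)] X] t hom_objs by blast
  have k: "ngt C (shm C f) = k" using f t neg_neg by metis
  have "triangle C X Y Z f g h" using f t by (simp add: triangle_def)
  then have "(X,Y,Z,f,g,h) \<in> dist C" using dist_rotate_iff d k by metis
  then show ?thesis using f k by blast
qed

lemma isomorphicE:
  assumes "isomorphic C X Y"
  obtains f g where "f \<in> hom C X Y" "g \<in> hom C Y X" "cmp C g f = idm C X" "cmp C f g = idm C Y"
  using assms unfolding isomorphic_def is_iso_def by blast

lemma isomorphic_sym: "isomorphic C X Y \<Longrightarrow> isomorphic C Y X"
  unfolding isomorphic_def is_iso_def by blast

lemma is_iso_id: "X \<in> obj C \<Longrightarrow> is_iso C X X (idm C X)"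
  unfolding is_iso_def using id_in_hom comp_id_left by metis

lemma dist_transport:
  assumes d: "(X,Y,Z,f,g,h) \<in> dist C"
    and b: "b \<in> hom C Y Y'" "b' \<in> hom C Y' Y" "cmp C b' b = idm C Y" "cmp C b b' = idm C Y'"
    and c: "c \<in> hom C Z Z'" "c' \<in> hom C Z' Z" "cmp C c' c = idm C Z" "cmp C c c' = idm C Z'"
  shows "(X, Y', Z', cmp C b f, cmp C (cmp C c g) b', cmp C h c') \<in> dist C"
proof -
  have t: "f \<in> hom C X Y" "g \<in> hom C Y Z" "h \<in> hom C Z (sho C X)" using dist_in_hom[OF d] by auto
  have X: "X \<in> obj C" using t hom_objs by blast
  have tri: "triangle C X Y' Z' (cmp C b f) (cmp C (cmp C c g) b') (cmp C h c')"
    unfolding triangle_def using t b c comp_in_hom by blast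
  have iso: "is_iso C Y Y' b" "is_iso C Z Z' c" using b c unfolding is_iso_def by blast+
  have e1: "cmp C b f = cmp C (cmp C b f) (idm C X)" using t b comp_in_hom comp_id_right by metis
  have "cmp C (cmp C (cmp C c g) b') b = cmp C (cmp C c g) (cmp C b' b)"
    using t b c comp_in_hom comp_assoc by metis
  then have e2: "cmp C c g = cmp C (cmp C (cmp C c g) b') b" using t b c comp_in_hom comp_id_right by metis
  have "cmp C (cmp C h c') c = cmp C h (cmp C c' c)" using t c comp_assoc by metis
  then have e3: "cmp C (shm C (idm C X)) h = cmp C (cmp C h c') c"
    using t c X comp_id_right comp_id_left shift_id by metis
  show ?thesis using dist_iso_closed[OF d tri is_iso_id[OF X] iso e1 e2 e3] .
qed

lemma dist_transport_third:
  assumes d: "(X,Y,Z,f,g,h) \<in> dist C"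
    and c: "c \<in> hom C Z Z'" "c' \<in> hom C Z' Z" "cmp C c' c = idm C Z" "cmp C c c' = idm C Z'"
  shows "(X, Y, Z', f, cmp C c g, cmp C h c') \<in> dist C"
proof -
  have t: "f \<in> hom C X Y" "g \<in> hom C Y Z" using dist_in_hom[OF d] by auto
  have i: "idm C Y \<in> hom C Y Y" "cmp C (idm C Y) (idm C Y) = idm C Y"
    using id_in_hom comp_id_left t hom_objs by metis+
  have "(X, Y, Z', cmp C (idm C Y) f, cmp C (cmp C c g) (idm C Y), cmp C h c') \<in> dist C"
    using dist_transport[OF d i(1) i(1) i(2) i(2) c] .
  then show ?thesis using comp_id_left comp_id_right t c comp_in_hom by metis
qed

lemma dist_rotate_back_along_iso:
  assumes d: "(Y, Z, W, g, h, k) \<in> dist C" and iso: "isomorphic C W (sho C X)" and X: "X \<in> obj C"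
  shows "\<exists>f h'. (X, Y, Z, f, g, h') \<in> dist C"
proof -
  obtain c c' where "c \<in> hom C W (sho C X)" "c' \<in> hom C (sho C X) W"
    "cmp C c' c = idm C W" "cmp C c c' = idm C (sho C X)"
    using iso by (rule isomorphicE)
  then have "(Y, Z, sho C X, g, cmp C c h, cmp C k c') \<in> dist C" using dist_transport_third[OF d] by blast
  then show ?thesis using dist_rotate_back X by blast
qed

lemma dist_exists_with_third:
  assumes h: "h \<in> hom C W (sho C X)" and X: "X \<in> obj C"
  shows "\<exists>P j p. (X, P, W, j, p, h) \<in> dist C"
proof -
  obtain Q i i' where dQ: "(W, sho C X, Q, h, i, i') \<in> dist C" using dist_exists[OF h] by blast
  then have "i \<in> hom C (sho C X) Q" using dist_in_hom by blast
  then have "Q \<in> obj C" using hom_objs by blast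
  then obtain P where P: "P \<in> obj C" "isomorphic C (sho C P) Q" using shift_ess_surj by blast
  obtain p k where "(P, W, sho C X, p, h, k) \<in> dist C"
    using dist_rotate_back_along_iso[OF dQ isomorphic_sym[OF P(2)] P(1)] by blast
  then show ?thesis using dist_rotate_back X by blast
qed

lemma dist_comp_zero:
  assumes d: "(X,Y,Z,f,g,h) \<in> dist C"
  shows "cmp C g f = zer C X Z"
proof -
  have t: "f \<in> hom C X Y" "g \<in> hom C Y Z" using dist_in_hom[OF d] by auto
  have X: "X \<in> obj C" using t hom_objs by blast
  obtain Z0 where Z0: "zero_obj C Z0" using zero_object_exists by blast
  obtain w where "w \<in> hom C Z0 Z" "cmp C w (zer C X Z0) = cmp C g f"
    using dist_morphism_completion[OF dist_id_zero[OF X Z0] d id_in_hom[OF X] t(1) refl] by blast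
  then show ?thesis using X comp_zero_right by metis
qed

lemma dist_weak_kernel:
  assumes d: "(X,Y,Z,f,g,h) \<in> dist C" and m: "m \<in> hom C W Y" and gm: "cmp C g m = zer C W Z"
  shows "\<exists>n \<in> hom C W X. m = cmp C f n"
proof -
  have t: "f \<in> hom C X Y" "g \<in> hom C Y Z" "h \<in> hom C Z (sho C X)" using dist_in_hom[OF d] by auto
  have o: "X \<in> obj C" "W \<in> obj C" "Z \<in> obj C" using t m hom_objs by auto
  obtain Z0 where Z0: "zero_obj C Z0" using zero_object_exists by blast
  have z0: "Z0 \<in> obj C" using Z0 zero_obj_in_obj by blast
  have R: "(W, Z0, sho C W, zer C W Z0, zer C Z0 (sho C W), ngt C (shm C (idm C W))) \<in> dist C"
    using dist_rotate[OF dist_id_zero[OF o(2) Z0]] .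
  have c: "cmp C (zer C Z0 Z) (zer C W Z0) = cmp C g m" using gm comp_zero_left zero_in_hom o z0 by metis
  obtain w where w: "w \<in> hom C (sho C W) (sho C X)"
     "cmp C (shm C m) (ngt C (shm C (idm C W))) = cmp C (ngt C (shm C f)) w"
    using dist_morphism_completion[OF R dist_rotate[OF d] m zero_in_hom[OF z0 o(3)] c] by blast
  obtain n where n: "n \<in> hom C W X" "shm C n = w" using shift_surj[OF w(1) o(2) o(1)] by blast
  have sm: "shm C m \<in> hom C (sho C W) (sho C Y)" using m shift_hom by blast
  have sf: "shm C f \<in> hom C (sho C X) (sho C Y)" using t shift_hom by blast
  have "ngt C (shm C m) = cmp C (shm C m) (ngt C (shm C (idm C W)))"
    using comp_neg_right[OF sm id_in_hom[OF shift_obj[OF o(2)]]] comp_id_right[OF sm] o shift_id by metis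
  also have "\<dots> = ngt C (shm C (cmp C f n))"
    using w(2) comp_neg_left[OF sf w(1)] n t shift_comp by metis
  finally show ?thesis using shift_neg_inj m n t comp_in_hom by metis
qed

lemma dist_weak_cokernel:
  assumes d: "(X,Y,Z,f,g,h) \<in> dist C" and m: "m \<in> hom C Y W" and mf: "cmp C m f = zer C X W"
  shows "\<exists>n \<in> hom C Z W. m = cmp C n g"
proof -
  have t: "f \<in> hom C X Y" "g \<in> hom C Y Z" using dist_in_hom[OF d] by auto
  have o: "X \<in> obj C" "W \<in> obj C" using t m hom_objs by auto
  obtain Z0 where Z0: "zero_obj C Z0" using zero_object_exists by blast
  have z0: "Z0 \<in> obj C" using Z0 zero_obj_in_obj by blast
  obtain W' where W': "W' \<in> obj C" "isomorphic C (sho C W') W" using shift_ess_surj[OF o(2)] by blast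
  obtain \<phi> \<phi>' where \<phi>: "\<phi> \<in> hom C (sho C W') W" "\<phi>' \<in> hom C W (sho C W')"
    "cmp C \<phi> \<phi>' = idm C W"
    using W'(2) by (rule isomorphicE)
  have sW': "sho C W' \<in> obj C" using shift_obj W' by blast
  have R: "(Z0, sho C W', sho C W', zer C Z0 (sho C W'), ngt C (shm C (idm C W')),
            ngt C (shm C (zer C W' Z0))) \<in> dist C"
    using dist_rotate[OF dist_rotate[OF dist_id_zero[OF W'(1) Z0]]] .
  have v: "cmp C \<phi>' m \<in> hom C Y (sho C W')" using \<phi> m comp_in_hom by blast
  have "cmp C (cmp C \<phi>' m) f = cmp C \<phi>' (cmp C m f)" using comp_assoc[OF t(1) m \<phi>(2)] by simp
  also have "\<dots> = cmp C (zer C Z0 (sho C W')) (zer C X Z0)"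
    using mf comp_zero_right[OF \<phi>(2) o(1)] comp_zero_left[OF zero_in_hom[OF o(1) z0] sW'] by simp
  finally have c: "cmp C (cmp C \<phi>' m) f = cmp C (zer C Z0 (sho C W')) (zer C X Z0)" .
  obtain w where w: "w \<in> hom C Z (sho C W')" "cmp C w g = cmp C (ngt C (shm C (idm C W'))) (cmp C \<phi>' m)"
    using dist_morphism_completion[OF d R zero_in_hom[OF o(1) z0] v c] by blast
  have wg: "cmp C w g = ngt C (cmp C \<phi>' m)"
    using w(2) shift_id[OF W'(1)] comp_neg_left[OF id_in_hom[OF sW'] v] comp_id_left[OF v] by simp
  have n: "ngt C (cmp C \<phi> w) \<in> hom C Z W" using \<phi> w comp_in_hom neg_in_hom by blast
  have "cmp C (ngt C (cmp C \<phi> w)) g = ngt C (cmp C \<phi> (cmp C w g))"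
    using comp_neg_left[OF comp_in_hom[OF w(1) \<phi>(1)] t(2)] comp_assoc[OF t(2) w(1) \<phi>(1)] by simp
  also have "\<dots> = cmp C (cmp C \<phi> \<phi>') m"
    using wg comp_neg_right[OF \<phi>(1) v] neg_neg[OF comp_in_hom[OF v \<phi>(1)]] comp_assoc[OF m \<phi>(2) \<phi>(1)]
    by simp
  also have "\<dots> = m" using \<phi>(3) comp_id_left[OF m] by simp
  finally show ?thesis using n by metis
qed

lemma dist_third_zero_if_split_mono:
  assumes d: "(X, Y, Z, k, p, h) \<in> dist C" and f: "f \<in> hom C Y X" and fk: "cmp C f k = idm C X"
  shows "h = zer C Z (sho C X)"
proof -
  have t: "k \<in> hom C X Y" "h \<in> hom C Z (sho C X)" using dist_in_hom[OF d] by auto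
  have o: "X \<in> obj C" "Z \<in> obj C" "sho C Y \<in> obj C" using t shift_obj hom_objs by auto
  have sk: "shm C k \<in> hom C (sho C X) (sho C Y)" and sf: "shm C f \<in> hom C (sho C Y) (sho C X)"
    using t f shift_hom by auto
  have "ngt C (cmp C (shm C k) h) = zer C Z (sho C Y)"
    using dist_comp_zero[OF dist_rotate[OF dist_rotate[OF d]]] comp_neg_left[OF sk t(2)] by simp
  then have kh: "cmp C (shm C k) h = zer C Z (sho C Y)"
    using neg_neg[OF comp_in_hom[OF t(2) sk]] neg_zero[OF o(2,3)] by metis
  have "h = cmp C (shm C (cmp C f k)) h" using fk shift_id[OF o(1)] comp_id_left[OF t(2)] by simp
  also have "\<dots> = cmp C (shm C f) (cmp C (shm C k) h)"
    using shift_comp[OF t(1) f] comp_assoc[OF t(2) sk sf] by simp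
  finally show ?thesis using kh comp_zero_right[OF sf o(2)] by simp
qed

lemma dist_epi_if_third_zero:
  assumes d: "(X, Y, Z, k, p, zer C Z (sho C X)) \<in> dist C"
    and m: "m \<in> hom C Z W" and mp: "cmp C m p = zer C Y W"
  shows "m = zer C Z W"
proof -
  obtain n where "n \<in> hom C (sho C X) W" "m = cmp C n (zer C Z (sho C X))"
    using dist_weak_cokernel[OF dist_rotate[OF d] m mp] by blast
  then show ?thesis using comp_zero_right hom_objs[OF m] by simp
qed

text \<open>The complement is the cone of \<open>k\<close>: the triangle on \<open>k\<close> has vanishing third map, so its
  second map is epic and \<open>1 - k f\<close> factors through it.\<close>
lemma split_mono_biproduct:
  assumes k: "k \<in> hom C X Y" and f: "f \<in> hom C Y X" and fk: "cmp C f k = idm C X"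
  shows "\<exists>Z i p. biproduct C X Z Y k i f p"
proof -
  obtain Z p h where d: "(X, Y, Z, k, p, h) \<in> dist C" using dist_exists[OF k] by blast
  have p: "p \<in> hom C Y Z" using dist_in_hom[OF d] by auto
  have o: "X \<in> obj C" "Y \<in> obj C" "Z \<in> obj C" using k p hom_objs by auto
  have idY: "idm C Y \<in> hom C Y Y" and idZ: "idm C Z \<in> hom C Z Z" using id_in_hom o by auto
  have d0: "(X, Y, Z, k, p, zer C Z (sho C X)) \<in> dist C"
    using d dist_third_zero_if_split_mono[OF d f fk] by simp
  have kf: "cmp C k f \<in> hom C Y Y" using k f comp_in_hom by blast
  define e where "e = pls C (idm C Y) (ngt C (cmp C k f))"
  have e: "e \<in> hom C Y Y" unfolding e_def using kf idY add_in_hom neg_in_hom by blast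
  have "cmp C e k = pls C k (ngt C (cmp C k (cmp C f k)))"
    unfolding e_def using comp_add_distrib_right[OF idY neg_in_hom[OF kf] k]
      comp_neg_left[OF kf k] comp_id_left[OF k] comp_assoc[OF k f k] by simp
  then have "cmp C e k = zer C X Y" using fk comp_id_right[OF k] add_neg_right[OF k] by simp
  then obtain i where i: "i \<in> hom C Z Y" "e = cmp C i p" using dist_weak_cokernel[OF d e] by blast
  have "cmp C f e = zer C Y X"
    unfolding e_def using comp_add_distrib_left[OF idY neg_in_hom[OF kf] f]
      comp_neg_right[OF f kf] comp_assoc[OF f k f] fk comp_id_right[OF f] comp_id_left[OF f]
      add_neg_right[OF f] by simp
  then have "cmp C (cmp C f i) p = zer C Y X" using i comp_assoc[OF p i(1) f] by simp
  then have fi: "cmp C f i = zer C Z X" using dist_epi_if_third_zero[OF d0 comp_in_hom[OF i(1) f]] by blast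
  have pk: "cmp C p k = zer C X Z" using dist_comp_zero[OF d] .
  have pe: "cmp C p e = p"
    unfolding e_def using comp_add_distrib_left[OF idY neg_in_hom[OF kf] p]
      comp_neg_right[OF p kf] comp_assoc[OF f k p] pk comp_zero_left[OF f o(3)] comp_id_right[OF p]
      neg_zero[OF o(2,3)] add_zero_right[OF p] by simp
  have pi: "pls C (cmp C p i) (ngt C (idm C Z)) \<in> hom C Z Z"
    using add_in_hom[OF comp_in_hom[OF i(1) p] neg_in_hom[OF idZ]] .
  have "cmp C (pls C (cmp C p i) (ngt C (idm C Z))) p = pls C p (ngt C p)"
    using comp_add_distrib_right[OF comp_in_hom[OF i(1) p] neg_in_hom[OF idZ] p]
      comp_neg_left[OF idZ p] comp_id_left[OF p] comp_assoc[OF p i(1) p] i(2) pe by simp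
  then have "pls C (cmp C p i) (ngt C (idm C Z)) = zer C Z Z"
    using dist_epi_if_third_zero[OF d0 pi] add_neg_right[OF p] by simp
  then have pi': "cmp C p i = idm C Z" using eq_if_diff_zero[OF comp_in_hom[OF i(1) p] idZ] by blast
  have "pls C (cmp C k f) (cmp C i p) = idm C Y"
    using i(2) add_add_neg_cancel[OF kf idY] unfolding e_def by simp
  then have "biproduct C X Z Y k i f p"
    using o(2) k f p i(1) fk pi' fi pk unfolding biproduct_def by simp
  then show ?thesis by blast
qed

lemma dist_base_change:
  assumes d: "(X, M, T0, a, b, c) \<in> dist C" and w: "w \<in> hom C W T0"
  shows "\<exists>P j p q. (X, P, W, j, p, cmp C c w) \<in> dist C \<and> q \<in> hom C P M \<and> cmp C b q = cmp C w p"
proof -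
  have t: "a \<in> hom C X M" "b \<in> hom C M T0" "c \<in> hom C T0 (sho C X)" using dist_in_hom[OF d] by auto
  have o: "X \<in> obj C" "M \<in> obj C" using t hom_objs by auto
  have cw: "cmp C c w \<in> hom C W (sho C X)" using t w comp_in_hom by blast
  obtain P j p where dP: "(X, P, W, j, p, cmp C c w) \<in> dist C"
    using dist_exists_with_third[OF cw o(1)] by blast
  have p: "p \<in> hom C P W" using dist_in_hom[OF dP] by auto
  obtain z where z: "z \<in> hom C (sho C P) (sho C M)"
      "cmp C (shm C w) (ngt C (shm C p)) = cmp C (ngt C (shm C b)) z"
    using dist_morphism_completion[OF dist_rotate[OF dist_rotate[OF dP]] dist_rotate[OF dist_rotate[OF d]]
      w id_in_hom[OF shift_obj[OF o(1)]] comp_id_left[OF cw]] by blast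
  obtain q where q: "q \<in> hom C P M" "shm C q = z" using shift_surj[OF z(1)] hom_objs[OF p] o(2) by blast
  have "ngt C (shm C (cmp C b q)) = cmp C (ngt C (shm C b)) z"
    using shift_comp[OF q(1) t(2)] q(2) comp_neg_left[OF shift_hom[OF t(2)] z(1)] by simp
  also have "\<dots> = ngt C (shm C (cmp C w p))"
    using z(2) comp_neg_right[OF shift_hom[OF w] shift_hom[OF p]] shift_comp[OF p w] by simp
  finally have "cmp C b q = cmp C w p"
    using shift_neg_inj comp_in_hom[OF q(1) t(2)] comp_in_hom[OF p w] by blast
  then show ?thesis using dP q(1) by blast
qed

subsection \<open>Cotorsion pairs\<close>

lemma cotorsion_pair_left_perp:
  assumes cp: "cotorsion_pair C \<A> \<B>" and X: "X \<in> obj C"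
    and perp: "\<And>B m. B \<in> shift_up C \<B> \<Longrightarrow> m \<in> hom C X B \<Longrightarrow> m = zer C X B"
  shows "X \<in> \<A>"
proof -
  obtain A B f g h where A: "A \<in> \<A>" and B: "B \<in> shift_up C \<B>" and d: "(A, X, B, f, g, h) \<in> dist C"
    using X cp unfolding cotorsion_pair_def ext_def by blast
  have f: "f \<in> hom C A X" and g: "g \<in> hom C X B" using dist_in_hom[OF d] by auto
  have "cmp C g (idm C X) = zer C X B" using perp[OF B g] comp_id_right[OF g] by simp
  then obtain k where k: "k \<in> hom C X A" "idm C X = cmp C f k"
    using dist_weak_kernel[OF d id_in_hom[OF X]] by blast
  then obtain Z i p where "biproduct C X Z A k i f p" using split_mono_biproduct f by metis
  then show ?thesis using full_subcat_summand A cp unfolding cotorsion_pair_def by blast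
qed

lemma cotorsion_pair_ext_closed:
  assumes cp: "cotorsion_pair C \<A> \<B>" and M: "M \<in> ext C \<A> \<A>"
  shows "M \<in> \<A>"
proof (rule cotorsion_pair_left_perp[OF cp])
  obtain A1 A2 a b c where A: "A1 \<in> \<A>" "A2 \<in> \<A>" and d: "(A1, M, A2, a, b, c) \<in> dist C"
    using M unfolding ext_def by blast
  have a: "a \<in> hom C A1 M" and b: "b \<in> hom C M A2" using dist_in_hom[OF d] by auto
  show "M \<in> obj C" using M unfolding ext_def by blast
  fix B m assume B: "B \<in> shift_up C \<B>" and m: "m \<in> hom C M B"
  have hv: "hom_vanish C \<A> (shift_up C \<B>)" using cp unfolding cotorsion_pair_def by blast
  have "cmp C m a = zer C A1 B" using hom_vanishD[OF hv A(1) B comp_in_hom[OF a m]] .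
  then obtain n where n: "n \<in> hom C A2 B" "m = cmp C n b" using dist_weak_cokernel[OF d m] by blast
  then show "m = zer C M B" using hom_vanishD[OF hv A(2) B n(1)] comp_zero_left[OF b] hom_objs[OF m] by simp
qed

lemma cotorsion_pair_shift_down_hom_zero:
  assumes cp: "cotorsion_pair C \<A> \<B>" and X: "X \<in> shift_down C \<A>" and B: "B \<in> \<B>"
    and m: "m \<in> hom C X B"
  shows "m = zer C X B"
proof -
  have o: "X \<in> obj C" "B \<in> obj C" using hom_objs[OF m] by auto
  have "sho C X \<in> \<A>" using X unfolding shift_down_def by blast
  moreover have "sho C B \<in> shift_up C \<B>"
    unfolding shift_up_def isomorphic_def using B o shift_obj is_iso_id by blast
  ultimately have "shm C m = zer C (sho C X) (sho C B)"
    using cp shift_hom[OF m] hom_vanishD unfolding cotorsion_pair_def by blast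
  also have "\<dots> = shm C (zer C X B)"
    using cp shift_hom[OF zero_in_hom[OF o]] hom_vanishD \<open>sho C X \<in> \<A>\<close> \<open>sho C B \<in> shift_up C \<B>\<close>
    unfolding cotorsion_pair_def by metis
  finally show ?thesis using shift_inj m zero_in_hom[OF o] by blast
qed

end

section \<open>Twin cotorsion pairs\<close>

locale twin_cotorsion = triangulated +
  fixes \<S> \<T> \<U> \<V> :: "'o set"
  assumes twin: "twin_cotorsion_pair C \<S> \<T> \<U> \<V>"
begin

abbreviation \<W> :: "'o set" where "\<W> \<equiv> tcp_W \<U> \<T>"
abbreviation Cminus :: "'o set" where "Cminus \<equiv> tcp_Cminus C \<S> \<T> \<U>"
abbreviation Cplus :: "'o set" where "Cplus \<equiv> tcp_Cplus C \<T> \<U> \<V>"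

lemma cotorsion_ST: "cotorsion_pair C \<S> \<T>"
  and cotorsion_UV: "cotorsion_pair C \<U> \<V>"
  and hom_vanish_S_shift_V: "hom_vanish C \<S> (shift_up C \<V>)"
  using twin unfolding twin_cotorsion_pair_def by simp_all

lemma hom_vanish_U_shift_V: "hom_vanish C \<U> (shift_up C \<V>)"
  using cotorsion_UV unfolding cotorsion_pair_def by simp

lemma full_subcat_S: "full_subcat C \<S>" and full_subcat_T: "full_subcat C \<T>"
  and full_subcat_U: "full_subcat C \<U>"
  using cotorsion_ST cotorsion_UV unfolding cotorsion_pair_def by simp_all

lemma full_subcat_W: "full_subcat C \<W>"
  unfolding tcp_W_def using full_subcat_Int[OF full_subcat_U full_subcat_T] .

lemma U_subset_Cminus:
  assumes P: "P \<in> \<U>"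
  shows "P \<in> Cminus"
proof -
  have Po: "P \<in> obj C" using full_subcat_in_obj[OF full_subcat_U P] .
  obtain S1 T1' f g h where S1: "S1 \<in> \<S>" and T1': "T1' \<in> shift_up C \<T>"
    and d: "(S1, sho C P, T1', f, g, h) \<in> dist C"
    using shift_obj[OF Po] cotorsion_ST unfolding cotorsion_pair_def ext_def by blast
  obtain T1 where T1: "T1 \<in> \<T>" "isomorphic C T1' (sho C T1)"
    using T1' isomorphic_sym unfolding shift_up_def by blast
  have T1o: "T1 \<in> obj C" using full_subcat_in_obj[OF full_subcat_T T1(1)] .
  obtain t h1 where "(T1, S1, sho C P, t, f, h1) \<in> dist C"
    using dist_rotate_back_along_iso[OF d T1(2) T1o] by blast
  then obtain p where p: "p \<in> hom C P T1" "(P, T1, S1, p, t, f) \<in> dist C"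
    using dist_rotate_back[OF _ Po] by blast
  obtain S' where S': "S' \<in> obj C" "isomorphic C (sho C S') S1"
    using shift_ess_surj full_subcat_in_obj[OF full_subcat_S S1] by blast
  obtain s h2 where d': "(S', P, T1, s, p, h2) \<in> dist C"
    using dist_rotate_back_along_iso[OF p(2) isomorphic_sym[OF S'(2)] S'(1)] by blast
  have "sho C S' \<in> \<S>"
    using full_subcat_S S1 shift_obj[OF S'(1)] isomorphic_sym[OF S'(2)] unfolding full_subcat_def by blast
  then have S'd: "S' \<in> shift_down C \<S>" unfolding shift_down_def using S'(1) by blast
  have t: "t \<in> hom C T1 S1" using dist_in_hom[OF p(2)] by blast
  have "T1 \<in> \<U>" \<comment> \<open>the one place where the twin condition \<open>Hom(\<S>, \<V>[1]) = 0\<close> enters\<close>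
  proof (rule cotorsion_pair_left_perp[OF cotorsion_UV T1o])
    fix B m assume B: "B \<in> shift_up C \<V>" and m: "m \<in> hom C T1 B"
    have "cmp C m p = zer C P B" using hom_vanishD[OF hom_vanish_U_shift_V P B comp_in_hom[OF p(1) m]] .
    then obtain n where n: "n \<in> hom C S1 B" "m = cmp C n t" using dist_weak_cokernel[OF p(2) m] by blast
    then show "m = zer C T1 B"
      using hom_vanishD[OF hom_vanish_S_shift_V S1 B n(1)] comp_zero_left[OF t] hom_objs[OF m] by simp
  qed
  then show ?thesis unfolding tcp_Cminus_def ext_def tcp_W_def using Po S'd T1(1) d' by blast
qed

lemma U_to_Cplus_factors_through_W:
  assumes P: "P \<in> \<U>" and B: "B \<in> Cplus" and m: "m \<in> hom C P B"
  shows "factors_through C \<W> P B m"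
proof -
  obtain W V' i j k where W: "W \<in> \<W>" "V' \<in> shift_up C \<V>" "(W, B, V', i, j, k) \<in> dist C"
    using B unfolding tcp_Cplus_def ext_def by blast
  have i: "i \<in> hom C W B" and j: "j \<in> hom C B V'" using dist_in_hom[OF W(3)] by auto
  have "cmp C j m = zer C P V'" using hom_vanishD[OF hom_vanish_U_shift_V P W(2) comp_in_hom[OF m j]] .
  then obtain n where "n \<in> hom C P W" "m = cmp C i n" using dist_weak_kernel[OF W(3) m] by blast
  then show ?thesis using factors_throughI[OF W(1) _ i] by simp
qed

lemma Cminus_to_T_factors_through_W:
  assumes A: "A \<in> Cminus" and T0: "T0 \<in> \<T>" and h: "h \<in> hom C A T0"
  shows "factors_through C \<W> A T0 h"
proof -
  obtain S' W0 s r t where dA: "S' \<in> shift_down C \<S>" "W0 \<in> \<W>" "(S', A, W0, s, r, t) \<in> dist C"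
    using A unfolding tcp_Cminus_def ext_def by blast
  have s: "s \<in> hom C S' A" and r: "r \<in> hom C A W0" using dist_in_hom[OF dA(3)] by auto
  have "cmp C h s = zer C S' T0"
    using cotorsion_pair_shift_down_hom_zero[OF cotorsion_ST dA(1) T0 comp_in_hom[OF s h]] .
  then obtain w where "w \<in> hom C W0 T0" "h = cmp C w r" using dist_weak_cokernel[OF dA(3) h] by blast
  then show ?thesis using factors_throughI[OF dA(2) r] by simp
qed

lemma Cminus_to_ext_UT_factors_through_U:
  assumes A: "A \<in> Cminus" and M: "M \<in> ext C \<U> \<T>" and g: "g \<in> hom C A M"
  shows "factors_through C \<U> A M g"
proof -
  obtain U0 T0 a b c where dM: "U0 \<in> \<U>" "T0 \<in> \<T>" "(U0, M, T0, a, b, c) \<in> dist C"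
    using M unfolding ext_def by blast
  have a: "a \<in> hom C U0 M" and b: "b \<in> hom C M T0" and c: "c \<in> hom C T0 (sho C U0)"
    using dist_in_hom[OF dM(3)] by auto
  obtain W0 r w where W0: "W0 \<in> \<W>" and r: "r \<in> hom C A W0" and w: "w \<in> hom C W0 T0"
    and bg: "cmp C b g = cmp C w r"
    using Cminus_to_T_factors_through_W[OF A dM(2) comp_in_hom[OF g b]] unfolding factors_through_def by blast
  obtain P j p q where dP: "(U0, P, W0, j, p, cmp C c w) \<in> dist C" and q: "q \<in> hom C P M"
    and bq: "cmp C b q = cmp C w p"
    using dist_base_change[OF dM(3) w] by blast
  have "cmp C (cmp C c w) r = cmp C (cmp C c b) g"
    using comp_assoc[OF r w c] comp_assoc[OF g b c] bg by simp
  also have "\<dots> = zer C A (sho C U0)"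
    using dist_comp_zero[OF dist_rotate[OF dM(3)]] comp_zero_left[OF g] shift_obj hom_objs[OF a] by simp
  finally obtain l where l: "l \<in> hom C A P" "r = cmp C p l"
    using dist_weak_kernel[OF dist_rotate[OF dP] r] by blast
  have ql: "cmp C q l \<in> hom C A M" using comp_in_hom[OF l(1) q] .
  have p: "p \<in> hom C P W0" using dist_in_hom[OF dP] by blast
  define D where "D = pls C g (ngt C (cmp C q l))"
  have D: "D \<in> hom C A M" unfolding D_def using g ql add_in_hom neg_in_hom by blast
  have "cmp C b (cmp C q l) = cmp C w r"
    using comp_assoc[OF l(1) q b] bq comp_assoc[OF l(1) p w] l(2) by simp
  then have "cmp C b D = pls C (cmp C w r) (ngt C (cmp C w r))"
    unfolding D_def using comp_add_distrib_left[OF g neg_in_hom[OF ql] b] comp_neg_right[OF b ql] bg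
    by simp
  then have "cmp C b D = zer C A T0" using add_neg_right comp_in_hom[OF r w] by metis
  then obtain l' where l': "l' \<in> hom C A U0" "D = cmp C a l'" using dist_weak_kernel[OF dM(3) D] by blast
  have geq: "g = pls C (cmp C q l) (cmp C a l')"
    using add_add_neg_cancel[OF ql g] l'(2) unfolding D_def by simp
  have "P \<in> ext C \<U> \<U>"
    unfolding ext_def using dM(1) W0 dP hom_objs[OF q] unfolding tcp_W_def by blast
  then have "P \<in> \<U>" using cotorsion_pair_ext_closed[OF cotorsion_UV] by blast
  then show ?thesis
    using factors_through_add[OF full_subcat_U factors_throughI[OF _ l(1) q] factors_throughI[OF dM(1) l'(1) a]]
      geq by simp
qed

text \<open>Here \<open>\<psi>\<close> represents \<open>\<tau>\<^sup>- f\<close>.\<close>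
lemma coreflection_morphism_factors_through_U:
  assumes f: "factors_through C (ext C \<U> \<T>) X Y f"
    and cX: "coreflection C \<W> Cminus X AX eX" and cY: "coreflection C \<W> Cminus Y AY eY"
    and \<psi>: "\<psi> \<in> hom C AX AY" and comm: "qeq C \<W> AX Y (cmp C eY \<psi>) (cmp C f eX)"
  shows "\<exists>\<psi>'. factors_through C \<U> AX AY \<psi>' \<and> qeq C \<W> AX AY \<psi>' \<psi>"
proof -
  have AX: "AX \<in> Cminus" "eX \<in> hom C AX X" and eY: "eY \<in> hom C AY Y"
    and lift: "\<And>Z g. Z \<in> Cminus \<Longrightarrow> g \<in> hom C Z Y \<Longrightarrow> \<exists>p \<in> hom C Z AY. qeq C \<W> Z Y (cmp C eY p) g"
    and unique: "\<And>Z p p'. Z \<in> Cminus \<Longrightarrow> p \<in> hom C Z AY \<Longrightarrow> p' \<in> hom C Z AY \<Longrightarrow>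
       qeq C \<W> Z Y (cmp C eY p) (cmp C eY p') \<Longrightarrow> qeq C \<W> Z AY p p'"
    using cX cY unfolding coreflection_def by blast+
  obtain M a b where M: "M \<in> ext C \<U> \<T>" and a: "a \<in> hom C X M" and b: "b \<in> hom C M Y"
    and f_eq: "f = cmp C b a"
    using f unfolding factors_through_def by blast
  obtain P l q where P: "P \<in> \<U>" and l: "l \<in> hom C AX P" and q: "q \<in> hom C P M"
    and ql: "cmp C a eX = cmp C q l"
    using Cminus_to_ext_UT_factors_through_U[OF AX(1) M comp_in_hom[OF AX(2) a]]
    unfolding factors_through_def by blast
  obtain p where p: "p \<in> hom C P AY" "qeq C \<W> P Y (cmp C eY p) (cmp C b q)"
    using lift[OF U_subset_Cminus[OF P] comp_in_hom[OF q b]] by blast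
  have "cmp C (cmp C b q) l = cmp C f eX"
    using comp_assoc[OF l q b] ql comp_assoc[OF AX(2) a b] f_eq by simp
  then have "qeq C \<W> AX Y (cmp C eY (cmp C p l)) (cmp C f eX)"
    using qeq_comp_right[OF full_subcat_W p(2) l] comp_assoc[OF l p(1) eY] by simp
  then have "qeq C \<W> AX Y (cmp C eY (cmp C p l)) (cmp C eY \<psi>)"
    using qeq_trans[OF full_subcat_W _ qeq_sym[OF full_subcat_W comm]] by blast
  then have "qeq C \<W> AX AY (cmp C p l) \<psi>" using unique[OF AX(1) comp_in_hom[OF l p(1)] \<psi>] by blast
  then show ?thesis using factors_throughI[OF P l p(1)] by blast
qed

text \<open>Here \<open>\<phi>\<close> represents \<open>\<tau>\<^sup>+ \<psi>\<close>.\<close>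
lemma reflection_morphism_zero_if_through_U:
  assumes rX: "reflection C \<W> Cplus AX BX uX" and rY: "reflection C \<W> Cplus AY BY uY"
    and \<psi>': "factors_through C \<U> AX AY \<psi>'" and q\<psi>: "qeq C \<W> AX AY \<psi>' \<psi>"
    and \<phi>: "\<phi> \<in> hom C BX BY" and comm: "qeq C \<W> AX BY (cmp C \<phi> uX) (cmp C uY \<psi>)"
  shows "qeq C \<W> BX BY \<phi> (zer C BX BY)"
proof -
  have uX: "uX \<in> hom C AX BX" and BY: "BY \<in> Cplus" "uY \<in> hom C AY BY"
    and unique: "\<And>Z p p'. Z \<in> Cplus \<Longrightarrow> p \<in> hom C BX Z \<Longrightarrow> p' \<in> hom C BX Z \<Longrightarrow>
       qeq C \<W> AX Z (cmp C p uX) (cmp C p' uX) \<Longrightarrow> qeq C \<W> BX Z p p'"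
    using rX rY unfolding reflection_def by blast+
  obtain P l p where P: "P \<in> \<U>" and l: "l \<in> hom C AX P" and p: "p \<in> hom C P AY"
    and \<psi>'_eq: "\<psi>' = cmp C p l"
    using \<psi>' unfolding factors_through_def by blast
  have "factors_through C \<W> AX BY (cmp C uY \<psi>')"
    using factors_through_comp_right[OF U_to_Cplus_factors_through_W[OF P BY(1) comp_in_hom[OF p BY(2)]] l]
      comp_assoc[OF l p BY(2)] \<psi>'_eq by simp
  moreover have "qeq C \<W> AX BY (cmp C \<phi> uX) (cmp C uY \<psi>')"
    using qeq_trans[OF full_subcat_W comm qeq_sym[OF full_subcat_W qeq_comp_left[OF full_subcat_W q\<psi> BY(2)]]] .
  ultimately have "factors_through C \<W> AX BY (cmp C \<phi> uX)"
    using factors_through_if_qeq[OF full_subcat_W] by blast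
  then have "qeq C \<W> AX BY (cmp C \<phi> uX) (cmp C (zer C BX BY) uX)"
    using qeq_zero_iff[OF full_subcat_W comp_in_hom[OF uX \<phi>]] comp_zero_left[OF uX] hom_objs[OF \<phi>] by simp
  then show ?thesis using unique[OF BY(1) \<phi>] zero_in_hom hom_objs[OF \<phi>] by blast
qed

lemma H_vanishes_on_morphisms_through_ext_UT:
  assumes f: "factors_through C (ext C \<U> \<T>) X Y f"
    and HX: "H_value C \<S> \<T> \<U> \<V> X AX eX BX uX" and HY: "H_value C \<S> \<T> \<U> \<V> Y AY eY BY uY"
    and \<psi>: "\<psi> \<in> hom C AX AY" and q1: "qeq C \<W> AX Y (cmp C eY \<psi>) (cmp C f eX)"
    and \<phi>: "\<phi> \<in> hom C BX BY" and q2: "qeq C \<W> AX BY (cmp C \<phi> uX) (cmp C uY \<psi>)"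
  shows "qeq C \<W> BX BY \<phi> (zer C BX BY)"
proof -
  obtain \<psi>' where "factors_through C \<U> AX AY \<psi>'" "qeq C \<W> AX AY \<psi>' \<psi>"
    using coreflection_morphism_factors_through_U[OF f _ _ \<psi> q1] HX HY unfolding H_value_def by blast
  then show ?thesis
    using reflection_morphism_zero_if_through_U[OF _ _ _ _ \<phi> q2] HX HY unfolding H_value_def by blast
qed

lemma H_value_zero_on_ext_UT:
  assumes X: "X \<in> ext C \<U> \<T>" and H: "H_value C \<S> \<T> \<U> \<V> X A e B u"
  shows "zero_in_quotient C \<W> B"
proof -
  have e: "e \<in> hom C A X" and u: "u \<in> hom C A B"
    using H unfolding H_value_def coreflection_def reflection_def by blast+
  have o: "X \<in> obj C" "A \<in> obj C" "B \<in> obj C" using e u hom_objs by auto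
  have "factors_through C (ext C \<U> \<T>) X X (cmp C (idm C X) (idm C X))"
    using factors_throughI[OF X id_in_hom[OF o(1)] id_in_hom[OF o(1)]] .
  then have "factors_through C (ext C \<U> \<T>) X X (idm C X)" using comp_id_left[OF id_in_hom[OF o(1)]] by simp
  moreover have "qeq C \<W> A X (cmp C e (idm C A)) (cmp C (idm C X) e)"
    using qeq_refl[OF full_subcat_W e] comp_id_left[OF e] comp_id_right[OF e] by simp
  moreover have "qeq C \<W> A B (cmp C (idm C B) u) (cmp C u (idm C A))"
    using qeq_refl[OF full_subcat_W u] comp_id_left[OF u] comp_id_right[OF u] by simp
  ultimately have "qeq C \<W> B B (idm C B) (zer C B B)"
    using H_vanishes_on_morphisms_through_ext_UT[OF _ H H id_in_hom[OF o(2)] _ id_in_hom[OF o(3)]] by blast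
  then show ?thesis unfolding zero_in_quotient_def using qeq_zero_iff[OF full_subcat_W id_in_hom[OF o(3)]] by blast
qed

lemma U_subset_ext_UT:
  assumes X: "X \<in> \<U>"
  shows "X \<in> ext C \<U> \<T>"
proof -
  have Xo: "X \<in> obj C" using full_subcat_in_obj[OF full_subcat_U X] .
  obtain Z where Z: "zero_obj C Z" using zero_object_exists by blast
  then have "Z \<in> \<T>" using full_subcat_T unfolding full_subcat_def by blast
  then show ?thesis unfolding ext_def using Xo X dist_id_zero[OF Xo Z] by blast
qed

lemma T_subset_ext_UT:
  assumes X: "X \<in> \<T>"
  shows "X \<in> ext C \<U> \<T>"
proof -
  have Xo: "X \<in> obj C" using full_subcat_in_obj[OF full_subcat_T X] .
  obtain Z where Z: "zero_obj C Z" using zero_object_exists by blast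
  then have ZU: "Z \<in> \<U>" using full_subcat_U unfolding full_subcat_def by blast
  obtain X' where X': "X' \<in> obj C" "isomorphic C (sho C X') X" using shift_ess_surj[OF Xo] by blast
  obtain \<phi> \<phi>' where \<phi>: "\<phi> \<in> hom C (sho C X') X" "\<phi>' \<in> hom C X (sho C X')"
    "cmp C \<phi>' \<phi> = idm C (sho C X')" "cmp C \<phi> \<phi>' = idm C X"
    using X'(2) by (rule isomorphicE)
  have "(Z, sho C X', sho C X', zer C Z (sho C X'), ngt C (shm C (idm C X')),
         ngt C (shm C (zer C X' Z))) \<in> dist C"
    using dist_rotate[OF dist_rotate[OF dist_id_zero[OF X'(1) Z]]] .
  then have "(Z, X, X, cmp C \<phi> (zer C Z (sho C X')), cmp C (cmp C \<phi> (ngt C (shm C (idm C X')))) \<phi>',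
         cmp C (ngt C (shm C (zer C X' Z))) \<phi>') \<in> dist C"
    using dist_transport[OF _ \<phi> \<phi>] by blast
  then show ?thesis unfolding ext_def using Xo ZU X by blast
qed

end

theorem proposition2p18:
  fixes C :: "('o, 'm) tricat"
    and \<S> \<T> \<U> \<V> :: "'o set"
  assumes "triangulated_category C"
    and "twin_cotorsion_pair C \<S> \<T> \<U> \<V>"
  shows
    "(\<forall>X A e B u. X \<in> ext C \<U> \<T> \<and> H_value C \<S> \<T> \<U> \<V> X A e B u
        \<longrightarrow> zero_in_quotient C (tcp_W \<U> \<T>) B)
     \<and> (\<forall>X Y f AX eX BX uX AY eY BY uY psi phi.
          (\<exists>M \<in> ext C \<U> \<T>. factors_through C {M} X Y f) \<and>
          H_value C \<S> \<T> \<U> \<V> X AX eX BX uX \<and> H_value C \<S> \<T> \<U> \<V> Y AY eY BY uY \<and>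
          psi \<in> hom C AX AY \<and> qeq C (tcp_W \<U> \<T>) AX Y (cmp C eY psi) (cmp C f eX) \<and>
          phi \<in> hom C BX BY \<and> qeq C (tcp_W \<U> \<T>) AX BY (cmp C phi uX) (cmp C uY psi)
          \<longrightarrow> qeq C (tcp_W \<U> \<T>) BX BY phi (zer C BX BY))
     \<and> (\<forall>X A e B u. X \<in> \<U> \<and> H_value C \<S> \<T> \<U> \<V> X A e B u
        \<longrightarrow> zero_in_quotient C (tcp_W \<U> \<T>) B)
     \<and> (\<forall>X A e B u. X \<in> \<T> \<and> H_value C \<S> \<T> \<U> \<V> X A e B u
        \<longrightarrow> zero_in_quotient C (tcp_W \<U> \<T>) B)"
proof -
  have "additive_category C" using assms(1) unfolding triangulated_category_def by (elim conjE)
  then interpret twin_cotorsion C \<S> \<T> \<U> \<V>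
    using assms by unfold_locales
  have through_ext: "factors_through C (ext C \<U> \<T>) X Y f"
    if "\<exists>M \<in> ext C \<U> \<T>. factors_through C {M} X Y f" for X Y f
    using that unfolding factors_through_def by blast
  show ?thesis
  proof (intro conjI allI impI; elim conjE)
    show "zero_in_quotient C \<W> B" if "X \<in> ext C \<U> \<T>" "H_value C \<S> \<T> \<U> \<V> X A e B u" for X A e B u
      using H_value_zero_on_ext_UT that .
    show "qeq C \<W> BX BY phi (zer C BX BY)"
      if "\<exists>M \<in> ext C \<U> \<T>. factors_through C {M} X Y f"
        "H_value C \<S> \<T> \<U> \<V> X AX eX BX uX" "H_value C \<S> \<T> \<U> \<V> Y AY eY BY uY"
        "psi \<in> hom C AX AY" "qeq C \<W> AX Y (cmp C eY psi) (cmp C f eX)"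
        "phi \<in> hom C BX BY" "qeq C \<W> AX BY (cmp C phi uX) (cmp C uY psi)"
      for X Y f AX eX BX uX AY eY BY uY psi phi
      using H_vanishes_on_morphisms_through_ext_UT[OF through_ext[OF that(1)] that(2-)] .
    show "zero_in_quotient C \<W> B" if "X \<in> \<U>" "H_value C \<S> \<T> \<U> \<V> X A e B u" for X A e B u
      using H_value_zero_on_ext_UT[OF U_subset_ext_UT] that .
    show "zero_in_quotient C \<W> B" if "X \<in> \<T>" "H_value C \<S> \<T> \<U> \<V> X A e B u" for X A e B u
      using H_value_zero_on_ext_UT[OF T_subset_ext_UT] that .
  qed
qed

end
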